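(* Let $n\ge 1$ and let $M$ be a finitely generated $A$-module. Then $M$ is $n$-strongly Gorenstein-projective if and only if $\Omega^nM\cong M$ in the stable category $A\text{-}\underline{\mathrm{mod}}$ and $\mathrm{Ext}^i_A(M,A)=0$ for $1\le i\le n$.
   Context: $A$ is an artin algebra; modules are finitely generated left $A$-modules. A complex $P^\bullet$ of finitely generated projective modules is totally acyclic if it is acyclic and $\mathrm{Hom}_A(P^\bullet,A)$ is acyclic. A totally acyclic complex is $n$-strong if it is $n$-periodic: $P^{i+n}=P^i$ and $d^{i+n}=d^i$ for all $i$. $M$ is $n$-strongly Gorenstein-projective if $M\cong Z^0(P^\bullet)$ for an $n$-strong totally acyclic complex $P^\bullet$. $A\text{-}\underline{\mathrm{mod}}$ is the stable category modulo morphisms factoring through projective modules; $\Omega M$ is the kernel of an epimorphism from a projective module onto $M$ (well defined in the stable category) and $\Omega^n$ its $n$-th iterate. *)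

theory Defs
  imports Main
begin

definition ring_ideal :: "'r::comm_ring_1 set \<Rightarrow> bool" where
  "ring_ideal I \<longleftrightarrow> 0 \<in> I \<and> (\<forall>x\<in>I. \<forall>y\<in>I. x + y \<in> I) \<and> (\<forall>r. \<forall>x\<in>I. r * x \<in> I)"

definition artinian_ring :: "'r::comm_ring_1 itself \<Rightarrow> bool" where
  "artinian_ring _ \<longleftrightarrow>
     (\<forall>I :: nat \<Rightarrow> 'r set. (\<forall>k. ring_ideal (I k) \<and> I (Suc k) \<subseteq> I k)
        \<longrightarrow> (\<exists>N. \<forall>m\<ge>N. I m = I N))"

text \<open>The ring A (the whole type 'a) is an artin algebra over the commutative artinian
  ring R (the whole type 'r) via the structure map phi: phi is a unital ring homomorphism
  into the centre of A, and A is finitely generated as an R-module.\<close>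
definition artin_algebra :: "('r::comm_ring_1 \<Rightarrow> 'a::ring_1) \<Rightarrow> bool" where
  "artin_algebra phi \<longleftrightarrow>
     artinian_ring TYPE('r) \<and>
     phi 1 = 1 \<and> (\<forall>x y. phi (x + y) = phi x + phi y) \<and> (\<forall>x y. phi (x * y) = phi x * phi y) \<and>
     (\<forall>r a. phi r * a = a * phi r) \<and>
     (\<exists>S. finite S \<and> (\<forall>a. \<exists>c. a = (\<Sum>s\<in>S. phi (c s) * s)))"

record ('a, 'm) lmod =
  lcarrier :: "'m set"
  ladd :: "'m \<Rightarrow> 'm \<Rightarrow> 'm"
  lzero :: "'m"
  lsmult :: "'a \<Rightarrow> 'm \<Rightarrow> 'm"

definition lmodule :: "('a::ring_1, 'm) lmod \<Rightarrow> bool" where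
  "lmodule M \<longleftrightarrow>
     lzero M \<in> lcarrier M \<and>
     (\<forall>x\<in>lcarrier M. \<forall>y\<in>lcarrier M. ladd M x y \<in> lcarrier M) \<and>
     (\<forall>a. \<forall>x\<in>lcarrier M. lsmult M a x \<in> lcarrier M) \<and>
     (\<forall>x\<in>lcarrier M. \<forall>y\<in>lcarrier M. \<forall>z\<in>lcarrier M. ladd M (ladd M x y) z = ladd M x (ladd M y z)) \<and>
     (\<forall>x\<in>lcarrier M. \<forall>y\<in>lcarrier M. ladd M x y = ladd M y x) \<and>
     (\<forall>x\<in>lcarrier M. ladd M (lzero M) x = x) \<and>
     (\<forall>x\<in>lcarrier M. \<exists>y\<in>lcarrier M. ladd M x y = lzero M) \<and>
     (\<forall>a. \<forall>x\<in>lcarrier M. \<forall>y\<in>lcarrier M. lsmult M a (ladd M x y) = ladd M (lsmult M a x) (lsmult M a y)) \<and>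
     (\<forall>a b. \<forall>x\<in>lcarrier M. lsmult M (a + b) x = ladd M (lsmult M a x) (lsmult M b x)) \<and>
     (\<forall>a b. \<forall>x\<in>lcarrier M. lsmult M (a * b) x = lsmult M a (lsmult M b x)) \<and>
     (\<forall>x\<in>lcarrier M. lsmult M 1 x = x)"

definition lsub :: "('a::ring_1, 'm) lmod \<Rightarrow> 'm \<Rightarrow> 'm \<Rightarrow> 'm" where
  "lsub M x y = ladd M x (lsmult M (-1) y)"

definition submodule :: "'m set \<Rightarrow> ('a::ring_1, 'm) lmod \<Rightarrow> bool" where
  "submodule N M \<longleftrightarrow> N \<subseteq> lcarrier M \<and> lzero M \<in> N \<and>
     (\<forall>x\<in>N. \<forall>y\<in>N. ladd M x y \<in> N) \<and> (\<forall>a. \<forall>x\<in>N. lsmult M a x \<in> N)"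

definition fin_gen :: "('a::ring_1, 'm) lmod \<Rightarrow> bool" where
  "fin_gen M \<longleftrightarrow> (\<exists>S. finite S \<and> S \<subseteq> lcarrier M \<and>
     (\<forall>N. submodule N M \<and> S \<subseteq> N \<longrightarrow> N = lcarrier M))"

text \<open>A-linear maps (only their values on the carrier matter).\<close>
definition lhom :: "('a::ring_1, 'm) lmod \<Rightarrow> ('a, 'n) lmod \<Rightarrow> ('m \<Rightarrow> 'n) set" where
  "lhom M N = {f. (\<forall>x\<in>lcarrier M. f x \<in> lcarrier N) \<and>
     (\<forall>x\<in>lcarrier M. \<forall>y\<in>lcarrier M. f (ladd M x y) = ladd N (f x) (f y)) \<and>
     (\<forall>a. \<forall>x\<in>lcarrier M. f (lsmult M a x) = lsmult N a (f x))}"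

definition lmod_iso :: "('a::ring_1, 'm) lmod \<Rightarrow> ('a, 'n) lmod \<Rightarrow> bool" where
  "lmod_iso M N \<longleftrightarrow> (\<exists>f\<in>lhom M N. bij_betw f (lcarrier M) (lcarrier N))"

definition lkernel :: "('a::ring_1, 'm) lmod \<Rightarrow> ('a, 'n) lmod \<Rightarrow> ('m \<Rightarrow> 'n) \<Rightarrow> ('a, 'm) lmod" where
  "lkernel M N f = M\<lparr>lcarrier := {x \<in> lcarrier M. f x = lzero N}\<rparr>"

definition regmod :: "('a::ring_1, 'a) lmod" where
  "regmod = \<lparr>lcarrier = UNIV, ladd = (+), lzero = 0, lsmult = (*)\<rparr>"

text \<open>All auxiliary modules (projectives, syzygies, complexes) are realised with elements
  in the type nat \<Rightarrow> 'a, which contains a copy of every free module A^m and hence (up to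
  isomorphism) every finitely generated module appearing below. Projectivity is the lifting
  property against all epimorphisms between modules of this type.\<close>
definition fg_projective :: "('a::ring_1, nat \<Rightarrow> 'a) lmod \<Rightarrow> bool" where
  "fg_projective P \<longleftrightarrow> lmodule P \<and> fin_gen P \<and>
     (\<forall>(X :: ('a, nat \<Rightarrow> 'a) lmod) (Y :: ('a, nat \<Rightarrow> 'a) lmod) g f.
        lmodule X \<and> lmodule Y \<and> g \<in> lhom X Y \<and> g ` lcarrier X = lcarrier Y \<and> f \<in> lhom P Y
        \<longrightarrow> (\<exists>h\<in>lhom P X. \<forall>x\<in>lcarrier P. g (h x) = f x))"

definition factors_through_proj :: "('a::ring_1, 'm) lmod \<Rightarrow> ('a, 'n) lmod \<Rightarrow> ('m \<Rightarrow> 'n) \<Rightarrow> bool" where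
  "factors_through_proj X Y h \<longleftrightarrow>
     (\<exists>(Q :: ('a, nat \<Rightarrow> 'a) lmod) u v. fg_projective Q \<and> u \<in> lhom X Q \<and> v \<in> lhom Q Y \<and>
        (\<forall>x\<in>lcarrier X. h x = v (u x)))"

definition stably_iso :: "('a::ring_1, 'm) lmod \<Rightarrow> ('a, 'n) lmod \<Rightarrow> bool" where
  "stably_iso X Y \<longleftrightarrow>
     (\<exists>f\<in>lhom X Y. \<exists>g\<in>lhom Y X.
        factors_through_proj X X (\<lambda>x. lsub X (g (f x)) x) \<and>
        factors_through_proj Y Y (\<lambda>y. lsub Y (f (g y)) y))"

definition is_syzygy :: "('a::ring_1, 'm) lmod \<Rightarrow> ('a, nat \<Rightarrow> 'a) lmod \<Rightarrow> bool" where
  "is_syzygy M N \<longleftrightarrow>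
     (\<exists>P p. fg_projective P \<and> p \<in> lhom P M \<and> p ` lcarrier P = lcarrier M \<and> N = lkernel P M p)"

text \<open>\<Omega>^n M \<cong> M in the stable category (n \<ge> 1): for some (equivalently, any) choice of
  iterated syzygies \<Omega>M, \<Omega>^2 M, ..., \<Omega>^n M.\<close>
definition syzygy_stably_iso :: "nat \<Rightarrow> ('a::ring_1, 'm) lmod \<Rightarrow> bool" where
  "syzygy_stably_iso n M \<longleftrightarrow>
     (\<exists>Om :: nat \<Rightarrow> ('a, nat \<Rightarrow> 'a) lmod.
        is_syzygy M (Om 1) \<and> (\<forall>k. 1 \<le> k \<and> k < n \<longrightarrow> is_syzygy (Om k) (Om (Suc k))) \<and>
        stably_iso (Om n) M)"

text \<open>A projective resolution  ... \<rightarrow> P 1 \<rightarrow> P 0 \<rightarrow> M \<rightarrow> 0, with d k : P (k+1) \<rightarrow> P k and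
  augmentation e : P 0 \<rightarrow> M.\<close>
definition proj_resolution ::
  "('a::ring_1, 'm) lmod \<Rightarrow> (nat \<Rightarrow> ('a, nat \<Rightarrow> 'a) lmod) \<Rightarrow> (nat \<Rightarrow> (nat \<Rightarrow> 'a) \<Rightarrow> (nat \<Rightarrow> 'a))
     \<Rightarrow> ((nat \<Rightarrow> 'a) \<Rightarrow> 'm) \<Rightarrow> bool" where
  "proj_resolution M P d e \<longleftrightarrow>
     (\<forall>k. fg_projective (P k)) \<and>
     e \<in> lhom (P 0) M \<and> e ` lcarrier (P 0) = lcarrier M \<and>
     (\<forall>k. d k \<in> lhom (P (Suc k)) (P k)) \<and>
     {x \<in> lcarrier (P 0). e x = lzero M} = d 0 ` lcarrier (P 1) \<and>
     (\<forall>k. {x \<in> lcarrier (P (Suc k)). d k x = lzero (P k)} = d (Suc k) ` lcarrier (P (Suc (Suc k))))"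

text \<open>Ext^i_A(M, A) = 0 (i \<ge> 1): the i-th cohomology of Hom_A(P, A) vanishes, where P is a
  projective resolution of M (independent of the choice of resolution).\<close>
definition ext_vanishes :: "('a::ring_1, 'm) lmod \<Rightarrow> nat \<Rightarrow> bool" where
  "ext_vanishes M i \<longleftrightarrow>
     (\<exists>P d e. proj_resolution M P d e \<and>
        (\<forall>f\<in>lhom (P i) (regmod :: ('a, 'a) lmod).
           (\<forall>x\<in>lcarrier (P (Suc i)). f (d i x) = 0) \<longrightarrow>
           (\<exists>g\<in>lhom (P (i - 1)) (regmod :: ('a, 'a) lmod). \<forall>x\<in>lcarrier (P i). f x = g (d (i - 1) x))))"

definition totally_acyclic ::
  "(int \<Rightarrow> ('a::ring_1, nat \<Rightarrow> 'a) lmod) \<Rightarrow> (int \<Rightarrow> (nat \<Rightarrow> 'a) \<Rightarrow> (nat \<Rightarrow> 'a)) \<Rightarrow> bool" where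
  "totally_acyclic P d \<longleftrightarrow>
     (\<forall>i. fg_projective (P i)) \<and>
     (\<forall>i. d i \<in> lhom (P i) (P (i + 1))) \<and>
     (\<forall>i. {x \<in> lcarrier (P (i + 1)). d (i + 1) x = lzero (P (i + 2))} = d i ` lcarrier (P i)) \<and>
     (\<forall>i. \<forall>f\<in>lhom (P i) (regmod :: ('a, 'a) lmod).
        (\<forall>x\<in>lcarrier (P (i - 1)). f (d (i - 1) x) = 0) \<longrightarrow>
        (\<exists>g\<in>lhom (P (i + 1)) (regmod :: ('a, 'a) lmod). \<forall>x\<in>lcarrier (P i). f x = g (d i x)))"

definition n_strong :: "nat \<Rightarrow> (int \<Rightarrow> ('a::ring_1, nat \<Rightarrow> 'a) lmod) \<Rightarrow> (int \<Rightarrow> (nat \<Rightarrow> 'a) \<Rightarrow> (nat \<Rightarrow> 'a)) \<Rightarrow> bool" where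
  "n_strong n P d \<longleftrightarrow> totally_acyclic P d \<and>
     (\<forall>i. P (i + int n) = P i \<and> (\<forall>x\<in>lcarrier (P i). d (i + int n) x = d i x))"

definition n_strongly_GP :: "nat \<Rightarrow> ('a::ring_1, 'm) lmod \<Rightarrow> bool" where
  "n_strongly_GP n M \<longleftrightarrow>
     (\<exists>P d. n_strong n P d \<and> lmod_iso M (lkernel (P 0) (P 1) (d 0)))"

end

theory Submission
  imports Defs
begin

text \<open>
  If \<open>M \<cong> ker d\<^sub>0\<close> for an \<open>n\<close>-periodic totally acyclic complex \<open>P\<close>, the part of \<open>P\<close> to the left
  of degree \<open>0\<close> is a projective resolution of \<open>M\<close> with exact dual, so \<open>Ext\<^sup>i(M, A) = 0\<close> for all
  \<open>i \<ge> 1\<close>; its kernels are syzygies of \<open>M\<close>, and periodicity gives \<open>\<Omega>\<^sup>nM = ker d\<^sub>-\<^sub>n = ker d\<^sub>0 \<cong> M\<close>.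

  Conversely, take syzygies \<open>P\<^sub>n \<rightarrow> \<dots> \<rightarrow> P\<^sub>1 \<rightarrow> M\<close>. Comparing them with an arbitrary projective
  resolution shows that \<open>Ext\<^sup>k(M, A) = 0\<close> makes every map \<open>\<Omega>\<^sup>kM \<rightarrow> A\<close> extend to \<open>P\<^sub>k\<close>. Since
  \<open>\<Omega>\<^sup>nM\<close> is only stably isomorphic to \<open>M\<close>, \<open>P\<^sub>n\<close> is replaced by a summand of some \<open>P\<^sub>n \<oplus> Q\<close>
  whose syzygy is exactly \<open>M\<close>. Splicing the chain with itself along \<open>M\<close> gives an \<open>n\<close>-periodic
  complex, acyclic by construction and with exact dual by the extension property.
\<close>

lemma lmoduleD:
  assumes "lmodule M"
  shows lzero_closed: "lzero M \<in> lcarrier M"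
    and ladd_closed: "\<And>x y. x \<in> lcarrier M \<Longrightarrow> y \<in> lcarrier M \<Longrightarrow> ladd M x y \<in> lcarrier M"
    and lsmult_closed: "\<And>a x. x \<in> lcarrier M \<Longrightarrow> lsmult M a x \<in> lcarrier M"
    and ladd_assoc: "\<And>x y z. x \<in> lcarrier M \<Longrightarrow> y \<in> lcarrier M \<Longrightarrow> z \<in> lcarrier M \<Longrightarrow> ladd M (ladd M x y) z = ladd M x (ladd M y z)"
    and ladd_comm: "\<And>x y. x \<in> lcarrier M \<Longrightarrow> y \<in> lcarrier M \<Longrightarrow> ladd M x y = ladd M y x"
    and lzero_l: "\<And>x. x \<in> lcarrier M \<Longrightarrow> ladd M (lzero M) x = x"
    and linv_ex: "\<And>x. x \<in> lcarrier M \<Longrightarrow> \<exists>y\<in>lcarrier M. ladd M x y = lzero M"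
    and lsmult_add_r: "\<And>a x y. x \<in> lcarrier M \<Longrightarrow> y \<in> lcarrier M \<Longrightarrow> lsmult M a (ladd M x y) = ladd M (lsmult M a x) (lsmult M a y)"
    and lsmult_add_l: "\<And>a b x. x \<in> lcarrier M \<Longrightarrow> lsmult M (a + b) x = ladd M (lsmult M a x) (lsmult M b x)"
    and lsmult_assoc: "\<And>a b x. x \<in> lcarrier M \<Longrightarrow> lsmult M (a * b) x = lsmult M a (lsmult M b x)"
    and lsmult_one: "\<And>x. x \<in> lcarrier M \<Longrightarrow> lsmult M 1 x = x"
  using assms unfolding lmodule_def by auto

lemma lzero_r: "lmodule M \<Longrightarrow> x \<in> lcarrier M \<Longrightarrow> ladd M x (lzero M) = x"
  by (metis ladd_comm lzero_closed lzero_l)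

lemma ladd_left_comm: "lmodule M \<Longrightarrow> x \<in> lcarrier M \<Longrightarrow> y \<in> lcarrier M \<Longrightarrow> z \<in> lcarrier M \<Longrightarrow>
  ladd M x (ladd M y z) = ladd M y (ladd M x z)"
  by (metis ladd_assoc ladd_comm)

lemma ladd_4: "lmodule M \<Longrightarrow> x \<in> lcarrier M \<Longrightarrow> y \<in> lcarrier M \<Longrightarrow> u \<in> lcarrier M \<Longrightarrow> v \<in> lcarrier M \<Longrightarrow>
  ladd M (ladd M x y) (ladd M u v) = ladd M (ladd M x u) (ladd M y v)"
  by (simp add: ladd_assoc ladd_closed ladd_left_comm[of M y u v])

lemma ladd_cancel_l:
  assumes M: "lmodule M" and x: "x \<in> lcarrier M" and y: "y \<in> lcarrier M" and z: "z \<in> lcarrier M"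
    and e: "ladd M x y = ladd M x z"
  shows "y = z"
proof -
  obtain w where w: "w \<in> lcarrier M" "ladd M x w = lzero M" using linv_ex[OF M x] by blast
  have "ladd M (ladd M w x) y = ladd M (ladd M w x) z"
    using e M w x y z by (simp add: ladd_assoc)
  moreover have "ladd M w x = lzero M" using M w x by (simp add: ladd_comm)
  ultimately show ?thesis using M y z by (simp add: lzero_l)
qed

lemma lsmult_zero_l: "lmodule M \<Longrightarrow> x \<in> lcarrier M \<Longrightarrow> lsmult M 0 x = lzero M"
  by (metis add_0 ladd_cancel_l lsmult_add_l lsmult_closed lzero_closed lzero_r)

lemma lsmult_zero_r: "lmodule M \<Longrightarrow> lsmult M a (lzero M) = lzero M"
  by (metis ladd_cancel_l lsmult_add_r lsmult_closed lzero_closed lzero_l lzero_r)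

lemma lneg_r: "lmodule M \<Longrightarrow> x \<in> lcarrier M \<Longrightarrow> ladd M x (lsmult M (-1) x) = lzero M"
  by (metis lsmult_add_l lsmult_one lsmult_zero_l right_minus)

lemma lneg_l: "lmodule M \<Longrightarrow> x \<in> lcarrier M \<Longrightarrow> ladd M (lsmult M (-1) x) x = lzero M"
  by (metis lneg_r ladd_comm lsmult_closed)

lemma lsmult_minus_minus: "lmodule M \<Longrightarrow> x \<in> lcarrier M \<Longrightarrow> lsmult M (-1) (lsmult M (-1) x) = x"
  by (metis lsmult_assoc lsmult_one mult_minus1 minus_minus)

lemma lsub_closed: "lmodule M \<Longrightarrow> x \<in> lcarrier M \<Longrightarrow> y \<in> lcarrier M \<Longrightarrow> lsub M x y \<in> lcarrier M"
  unfolding lsub_def by (simp add: ladd_closed lsmult_closed)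

lemma lsub_self: "lmodule M \<Longrightarrow> x \<in> lcarrier M \<Longrightarrow> lsub M x x = lzero M"
  unfolding lsub_def by (simp add: lneg_r)

lemma lsub_zero: "lmodule M \<Longrightarrow> x \<in> lcarrier M \<Longrightarrow> lsub M x (lzero M) = x"
  unfolding lsub_def by (simp add: lsmult_zero_r lzero_r)

lemma lsub_add_cancel: "lmodule M \<Longrightarrow> x \<in> lcarrier M \<Longrightarrow> y \<in> lcarrier M \<Longrightarrow> ladd M (lsub M x y) y = x"
  unfolding lsub_def by (simp add: ladd_assoc lsmult_closed lneg_l lzero_r)

lemma lsub_eq_zero: "lmodule M \<Longrightarrow> x \<in> lcarrier M \<Longrightarrow> y \<in> lcarrier M \<Longrightarrow> lsub M x y = lzero M \<Longrightarrow> x = y"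
  by (metis lsub_add_cancel lzero_l)

lemma lsub_lsub: "lmodule M \<Longrightarrow> x \<in> lcarrier M \<Longrightarrow> y \<in> lcarrier M \<Longrightarrow> lsub M x (lsub M x y) = y"
  unfolding lsub_def
  by (metis lsmult_add_r lsmult_closed lsmult_minus_minus ladd_assoc lneg_r lzero_l ladd_closed)

lemma lsub_swap: "lmodule M \<Longrightarrow> x \<in> lcarrier M \<Longrightarrow> y \<in> lcarrier M \<Longrightarrow>
  lsub M x y = lsmult M (-1) (lsub M y x)"
  unfolding lsub_def by (simp add: lsmult_add_r lsmult_closed lsmult_minus_minus ladd_comm)

lemma lsub_neg: "lmodule M \<Longrightarrow> x \<in> lcarrier M \<Longrightarrow> y \<in> lcarrier M \<Longrightarrow>
  lsub M x (lsmult M (-1) y) = ladd M x y"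
  unfolding lsub_def by (simp add: lsmult_minus_minus)

lemma lsub_lsub_cancel:
  assumes M: "lmodule M" and a: "a \<in> lcarrier M" and b: "b \<in> lcarrier M" and c: "c \<in> lcarrier M"
  shows "lsub M (lsub M a b) (lsub M c b) = lsub M a c"
proof -
  have nb: "lsmult M (-1) b \<in> lcarrier M" and nc: "lsmult M (-1) c \<in> lcarrier M"
    using M b c by (auto intro: lsmult_closed)
  have "lsub M (lsub M a b) (lsub M c b) = ladd M (ladd M a (lsmult M (-1) b)) (ladd M (lsmult M (-1) c) b)"
    unfolding lsub_def using M b c by (simp add: lsmult_add_r lsmult_closed lsmult_minus_minus)
  also have "\<dots> = ladd M (ladd M a (lsmult M (-1) c)) (ladd M (lsmult M (-1) b) b)"
    using ladd_4[OF M a nb nc b] ladd_comm[OF M nb nc] ladd_4[OF M a nc nb b] by simp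
  also have "\<dots> = lsub M a c" unfolding lsub_def using M a b nc by (simp add: lneg_l lzero_r ladd_closed)
  finally show ?thesis .
qed

lemma submoduleD:
  assumes "submodule T M"
  shows "T \<subseteq> lcarrier M" "lzero M \<in> T" "\<And>x y. x \<in> T \<Longrightarrow> y \<in> T \<Longrightarrow> ladd M x y \<in> T"
    "\<And>a x. x \<in> T \<Longrightarrow> lsmult M a x \<in> T"
  using assms unfolding submodule_def by blast+

lemma lmodule_restrict_submodule: "lmodule (M\<lparr>lcarrier := C\<rparr>) \<Longrightarrow> C \<subseteq> lcarrier M \<Longrightarrow> submodule C M"
  unfolding lmodule_def submodule_def by auto

lemma submodule_lmodule:
  assumes M: "lmodule M" and N: "submodule N M"
  shows "lmodule (M\<lparr>lcarrier := N\<rparr>)"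
proof -
  have sub: "N \<subseteq> lcarrier M" using N unfolding submodule_def by blast
  have inv: "\<And>x. x \<in> N \<Longrightarrow> lsmult M (-1) x \<in> N" using N unfolding submodule_def by blast
  have c: "\<And>x. x \<in> N \<Longrightarrow> x \<in> lcarrier M" using sub by blast
  show ?thesis unfolding lmodule_def using N sub M
    apply (simp add: submodule_def)
    apply (intro conjI ballI allI)
    apply (auto simp: ladd_assoc lzero_l lsmult_add_r lsmult_add_l lsmult_assoc lsmult_one c
        intro!: bexI[of _ "lsmult M (-1) _"] lneg_r inv)
    by (metis ladd_comm c)
qed

lemma lsub_restrict[simp]: "lsub (M\<lparr>lcarrier := C\<rparr>) = lsub M"
  unfolding lsub_def by (auto intro!: ext)

lemma lhomD:
  assumes "f \<in> lhom M N"
  shows lhom_closed: "\<And>x. x \<in> lcarrier M \<Longrightarrow> f x \<in> lcarrier N"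
    and lhom_add: "\<And>x y. x \<in> lcarrier M \<Longrightarrow> y \<in> lcarrier M \<Longrightarrow> f (ladd M x y) = ladd N (f x) (f y)"
    and lhom_smult: "\<And>a x. x \<in> lcarrier M \<Longrightarrow> f (lsmult M a x) = lsmult N a (f x)"
  using assms unfolding lhom_def by blast+

lemma lhom_restrict_target_iff:
  "C \<subseteq> lcarrier N \<Longrightarrow> f \<in> lhom X (N\<lparr>lcarrier := C\<rparr>) \<longleftrightarrow> f \<in> lhom X N \<and> (\<forall>x\<in>lcarrier X. f x \<in> C)"
  unfolding lhom_def by (auto simp: subset_iff)

lemma lhom_restrict:
  "C \<subseteq> lcarrier X \<Longrightarrow> f \<in> lhom X N \<Longrightarrow> f \<in> lhom (X\<lparr>lcarrier := C\<rparr>) N"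
  unfolding lhom_def by (auto simp: subset_iff)

lemma lhom_zero: "lmodule M \<Longrightarrow> lmodule N \<Longrightarrow> f \<in> lhom M N \<Longrightarrow> f (lzero M) = lzero N"
  by (metis lhom_closed lhom_smult lsmult_zero_l lzero_closed)

lemma lhom_sub: "f \<in> lhom M N \<Longrightarrow> x \<in> lcarrier M \<Longrightarrow> y \<in> lcarrier M \<Longrightarrow> lmodule M \<Longrightarrow>
   f (lsub M x y) = lsub N (f x) (f y)"
  unfolding lsub_def by (simp add: lhom_add lhom_smult lsmult_closed)

lemma lhom_comp: "f \<in> lhom M N \<Longrightarrow> g \<in> lhom N K \<Longrightarrow> (\<lambda>x. g (f x)) \<in> lhom M K"
  unfolding lhom_def by auto

lemma lhom_id: "(\<lambda>x. x) \<in> lhom M M"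
  unfolding lhom_def by auto

lemma lhom_zero_map: "lmodule N \<Longrightarrow> (\<lambda>x. lzero N) \<in> lhom M N"
  unfolding lhom_def by (simp add: lzero_closed lzero_l lsmult_zero_r)

lemma lhom_ladd:
  assumes N: "lmodule N" and f: "f \<in> lhom M N" and g: "g \<in> lhom M N"
  shows "(\<lambda>x. ladd N (f x) (g x)) \<in> lhom M N"
  unfolding lhom_def
proof (intro CollectI conjI ballI allI)
  fix x assume "x \<in> lcarrier M" thus "ladd N (f x) (g x) \<in> lcarrier N"
    using N f g by (simp add: ladd_closed lhom_closed)
next
  fix x y assume x: "x \<in> lcarrier M" and y: "y \<in> lcarrier M"
  show "ladd N (f (ladd M x y)) (g (ladd M x y)) = ladd N (ladd N (f x) (g x)) (ladd N (f y) (g y))"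
    using f g x y N by (simp add: lhom_add lhom_closed ladd_4)
next
  fix a x assume x: "x \<in> lcarrier M"
  show "ladd N (f (lsmult M a x)) (g (lsmult M a x)) = lsmult N a (ladd N (f x) (g x))"
    using f g x N by (simp add: lhom_smult lsmult_add_r lhom_closed)
qed

lemma lhom_neg:
  assumes N: "lmodule N" and f: "f \<in> lhom M N"
  shows "(\<lambda>x. lsmult N (-1) (f x)) \<in> lhom M N"
  unfolding lhom_def using N f
  by (auto simp: lhom_closed lsmult_closed lhom_add lhom_smult lsmult_add_r simp flip: lsmult_assoc)

lemma lhom_lsub:
  assumes N: "lmodule N" and f: "f \<in> lhom M N" and g: "g \<in> lhom M N"
  shows "(\<lambda>x. lsub N (f x) (g x)) \<in> lhom M N"
  unfolding lsub_def by (rule lhom_ladd[OF N f lhom_neg[OF N g]])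

lemma lhom_inv_into:
  assumes X: "lmodule X" and f: "f \<in> lhom X Y" and b: "bij_betw f (lcarrier X) (lcarrier Y)"
  shows "inv_into (lcarrier X) f \<in> lhom Y X"
proof -
  let ?g = "inv_into (lcarrier X) f"
  have gc: "\<And>y. y \<in> lcarrier Y \<Longrightarrow> ?g y \<in> lcarrier X" using b by (metis bij_betw_def inv_into_into)
  have fg: "\<And>y. y \<in> lcarrier Y \<Longrightarrow> f (?g y) = y" using b by (meson bij_betw_inv_into_right)
  have gf: "\<And>x. x \<in> lcarrier X \<Longrightarrow> ?g (f x) = x" using b by (meson bij_betw_inv_into_left)
  show ?thesis unfolding lhom_def
  proof (intro CollectI conjI ballI allI)
    fix y assume "y \<in> lcarrier Y" thus "?g y \<in> lcarrier X" by (rule gc)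
  next
    fix y1 y2 assume y1: "y1 \<in> lcarrier Y" and y2: "y2 \<in> lcarrier Y"
    have "f (ladd X (?g y1) (?g y2)) = ladd Y y1 y2" using lhom_add[OF f gc[OF y1] gc[OF y2]] fg y1 y2 by simp
    thus "?g (ladd Y y1 y2) = ladd X (?g y1) (?g y2)"
      using gf ladd_closed[OF X gc[OF y1] gc[OF y2]] by metis
  next
    fix a y assume y: "y \<in> lcarrier Y"
    have "f (lsmult X a (?g y)) = lsmult Y a y" using lhom_smult[OF f gc[OF y]] fg y by simp
    thus "?g (lsmult Y a y) = lsmult X a (?g y)"
      using gf lsmult_closed[OF X gc[OF y]] by metis
  qed
qed

lemma kernel_submodule:
  assumes M: "lmodule M" and N: "lmodule N" and f: "f \<in> lhom M N"
  shows "submodule {x \<in> lcarrier M. f x = lzero N} M"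
  unfolding submodule_def using M N f
  by (auto simp: lzero_closed ladd_closed lsmult_closed lhom_zero lhom_add lhom_smult lzero_l lsmult_zero_r)

lemma lkernel_lmodule:
  "lmodule M \<Longrightarrow> lmodule N \<Longrightarrow> f \<in> lhom M N \<Longrightarrow> lmodule (lkernel M N f)"
  unfolding lkernel_def by (rule submodule_lmodule, assumption, rule kernel_submodule)

lemma lkernel_simps[simp]:
  "lcarrier (lkernel M N f) = {x \<in> lcarrier M. f x = lzero N}"
  "ladd (lkernel M N f) = ladd M" "lzero (lkernel M N f) = lzero M" "lsmult (lkernel M N f) = lsmult M"
  "lsub (lkernel M N f) = lsub M"
  unfolding lkernel_def lsub_def by (auto intro!: ext)

lemma lkernel_cong: "lzero N = lzero N' \<Longrightarrow> lkernel M N f = lkernel M N' f"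
  unfolding lkernel_def by simp

lemma image_submodule:
  assumes M: "lmodule M" and N: "lmodule N" and f: "f \<in> lhom M N"
  shows "submodule (f ` lcarrier M) N"
  unfolding submodule_def
proof (intro conjI ballI allI)
  show "f ` lcarrier M \<subseteq> lcarrier N" using f by (auto intro: lhom_closed)
  show "lzero N \<in> f ` lcarrier M" using M N f by (metis image_eqI lhom_zero lzero_closed)
  fix y1 y2 assume "y1 \<in> f ` lcarrier M" "y2 \<in> f ` lcarrier M"
  then obtain x1 x2 where "x1 \<in> lcarrier M" "x2 \<in> lcarrier M" "y1 = f x1" "y2 = f x2" by blast
  thus "ladd N y1 y2 \<in> f ` lcarrier M" using M f by (metis image_eqI lhom_add ladd_closed)
next
  fix a y assume "y \<in> f ` lcarrier M"
  then obtain x where "x \<in> lcarrier M" "y = f x" by blast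
  thus "lsmult N a y \<in> f ` lcarrier M" using M f by (metis image_eqI lhom_smult lsmult_closed)
qed

lemma preimage_submodule:
  assumes M: "lmodule M" and N: "lmodule N" and f: "f \<in> lhom M N" and T: "submodule T N"
  shows "submodule {x \<in> lcarrier M. f x \<in> T} M"
  unfolding submodule_def
proof (intro conjI ballI allI)
  show "lzero M \<in> {x \<in> lcarrier M. f x \<in> T}" using M N f T by (simp add: lzero_closed lhom_zero submoduleD)
  fix x y assume "x \<in> {x \<in> lcarrier M. f x \<in> T}" "y \<in> {x \<in> lcarrier M. f x \<in> T}"
  thus "ladd M x y \<in> {x \<in> lcarrier M. f x \<in> T}" using M f T by (simp add: ladd_closed lhom_add submoduleD)
next
  fix a x assume "x \<in> {x \<in> lcarrier M. f x \<in> T}"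
  thus "lsmult M a x \<in> {x \<in> lcarrier M. f x \<in> T}" using M f T by (simp add: lsmult_closed lhom_smult submoduleD)
qed blast

lemma regmod_lmodule: "lmodule (regmod :: ('a::ring_1, 'a) lmod)"
  unfolding lmodule_def regmod_def by (auto simp: algebra_simps intro: exI[of _ "- _"])

lemma regmod_simps[simp]: "lcarrier regmod = UNIV" "ladd regmod = (+)" "lzero regmod = 0" "lsmult regmod = (*)"
  unfolding regmod_def by auto

lemma lhom_regmod_iff: "f \<in> lhom M regmod \<longleftrightarrow>
   (\<forall>x\<in>lcarrier M. \<forall>y\<in>lcarrier M. f (ladd M x y) = f x + f y) \<and> (\<forall>a. \<forall>x\<in>lcarrier M. f (lsmult M a x) = a * f x)"
  unfolding lhom_def by simp

lemma lhom_factor_epi: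
  assumes P: "lmodule P" and W: "lmodule W" and N: "lmodule N" and p: "p \<in> lhom P W"
    and po: "p ` lcarrier P = lcarrier W" and f: "f \<in> lhom P N"
    and van: "\<forall>x\<in>lcarrier P. p x = lzero W \<longrightarrow> f x = lzero N"
  shows "\<exists>f'\<in>lhom W N. \<forall>x\<in>lcarrier P. f x = f' (p x)"
proof -
  define pre where "pre = (\<lambda>w. SOME x. x \<in> lcarrier P \<and> p x = w)"
  have pre: "\<And>w. w \<in> lcarrier W \<Longrightarrow> pre w \<in> lcarrier P \<and> p (pre w) = w"
  proof -
    fix w assume "w \<in> lcarrier W"
    hence "w \<in> p ` lcarrier P" using po by simp
    hence "\<exists>x. x \<in> lcarrier P \<and> p x = w" by blast
    thus "pre w \<in> lcarrier P \<and> p (pre w) = w" unfolding pre_def by (rule someI_ex)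
  qed
  have wd: "\<And>x y. x \<in> lcarrier P \<Longrightarrow> y \<in> lcarrier P \<Longrightarrow> p x = p y \<Longrightarrow> f x = f y"
  proof -
    fix x y assume x: "x \<in> lcarrier P" and y: "y \<in> lcarrier P" and e: "p x = p y"
    have "p (lsub P x y) = lzero W" using lhom_sub[OF p x y P] e lsub_self[OF W lhom_closed[OF p y]] by simp
    hence "f (lsub P x y) = lzero N" using van lsub_closed[OF P x y] by blast
    hence "lsub N (f x) (f y) = lzero N" using lhom_sub[OF f x y P] by simp
    thus "f x = f y" using lsub_eq_zero[OF N lhom_closed[OF f x] lhom_closed[OF f y]] by blast
  qed
  define f' where "f' = (\<lambda>w. f (pre w))"
  have key: "\<And>x. x \<in> lcarrier P \<Longrightarrow> f' (p x) = f x"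
  proof -
    fix x assume x: "x \<in> lcarrier P"
    have "pre (p x) \<in> lcarrier P \<and> p (pre (p x)) = p x" using pre[OF lhom_closed[OF p x]] .
    thus "f' (p x) = f x" unfolding f'_def using wd[of "pre (p x)" x] x by blast
  qed
  have "f' \<in> lhom W N"
    unfolding lhom_def
  proof (intro CollectI conjI ballI allI)
    fix w assume w: "w \<in> lcarrier W"
    have "pre w \<in> lcarrier P" using pre[OF w] by (rule conjunct1)
    thus "f' w \<in> lcarrier N" unfolding f'_def by (rule lhom_closed[OF f])
  next
    fix w1 w2 assume w1: "w1 \<in> lcarrier W" and w2: "w2 \<in> lcarrier W"
    define x1 where "x1 = pre w1"
    define x2 where "x2 = pre w2"
    have x1: "x1 \<in> lcarrier P" "p x1 = w1" using pre[OF w1] unfolding x1_def by auto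
    have x2: "x2 \<in> lcarrier P" "p x2 = w2" using pre[OF w2] unfolding x2_def by auto
    have "ladd W w1 w2 = p (ladd P x1 x2)" using lhom_add[OF p x1(1) x2(1)] x1(2) x2(2) by simp
    hence "f' (ladd W w1 w2) = f (ladd P x1 x2)" using key[OF ladd_closed[OF P x1(1) x2(1)]] by simp
    also have "\<dots> = ladd N (f x1) (f x2)" using lhom_add[OF f x1(1) x2(1)] .
    also have "\<dots> = ladd N (f' w1) (f' w2)" using key[OF x1(1)] key[OF x2(1)] x1(2) x2(2) by simp
    finally show "f' (ladd W w1 w2) = ladd N (f' w1) (f' w2)" .
  next
    fix a w assume w: "w \<in> lcarrier W"
    define x where "x = pre w"
    have x: "x \<in> lcarrier P" "p x = w" using pre[OF w] unfolding x_def by auto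
    have "lsmult W a w = p (lsmult P a x)" using lhom_smult[OF p x(1)] x(2) by simp
    hence "f' (lsmult W a w) = f (lsmult P a x)" using key[OF lsmult_closed[OF P x(1)]] by simp
    also have "\<dots> = lsmult N a (f x)" using lhom_smult[OF f x(1)] .
    also have "\<dots> = lsmult N a (f' w)" using key[OF x(1)] x(2) by simp
    finally show "f' (lsmult W a w) = lsmult N a (f' w)" .
  qed
  thus ?thesis using key by (intro bexI[of _ f']) auto
qed

section \<open>Projective modules\<close>

lemma fin_gen_image:
  assumes M: "lmodule M" and N: "lmodule N" and f: "f \<in> lhom M N" and onto: "f ` lcarrier M = lcarrier N"
    and fg: "fin_gen M"
  shows "fin_gen N"
proof -
  from fg obtain S where S1: "finite S" and S2: "S \<subseteq> lcarrier M"
    and S3: "\<forall>T. submodule T M \<and> S \<subseteq> T \<longrightarrow> T = lcarrier M"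
    unfolding fin_gen_def by blast
  have "\<forall>T. submodule T N \<and> f ` S \<subseteq> T \<longrightarrow> T = lcarrier N"
  proof (intro allI impI)
    fix T assume T: "submodule T N \<and> f ` S \<subseteq> T"
    have T1: "submodule T N" and T2: "f ` S \<subseteq> T" using T by blast+
    have "submodule {x \<in> lcarrier M. f x \<in> T} M"
      by (rule preimage_submodule[OF M N f T1])
    moreover have "S \<subseteq> {x \<in> lcarrier M. f x \<in> T}" using S2 T2 by blast
    ultimately have E: "{x \<in> lcarrier M. f x \<in> T} = lcarrier M" using S3 by blast
    have "lcarrier N \<subseteq> T"
    proof
      fix y assume "y \<in> lcarrier N"
      hence "y \<in> f ` lcarrier M" by (simp only: onto)
      then obtain x where x: "x \<in> lcarrier M" "y = f x" by blast
      from x(1) have "x \<in> {x \<in> lcarrier M. f x \<in> T}" by (simp only: E)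
      thus "y \<in> T" using x(2) by blast
    qed
    thus "T = lcarrier N" using submoduleD(1)[OF T1] by blast
  qed
  moreover have "f ` S \<subseteq> lcarrier N" using S2 onto by blast
  ultimately show ?thesis unfolding fin_gen_def using S1 by blast
qed

lemma fg_projectiveD:
  assumes "fg_projective P"
  shows "lmodule P" "fin_gen P"
    "\<And>(X :: ('a::ring_1, nat \<Rightarrow> 'a) lmod) (Y :: ('a, nat \<Rightarrow> 'a) lmod) g f.
        lmodule X \<Longrightarrow> lmodule Y \<Longrightarrow> g \<in> lhom X Y \<Longrightarrow> g ` lcarrier X = lcarrier Y \<Longrightarrow> f \<in> lhom P Y
        \<Longrightarrow> (\<exists>h\<in>lhom P X. \<forall>x\<in>lcarrier P. g (h x) = f x)"
  using assms unfolding fg_projective_def by blast+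

lemma fg_projective_retract:
  assumes P: "fg_projective P" and C: "submodule C P" and r: "r \<in> lhom P (P\<lparr>lcarrier := C\<rparr>)"
    and rid: "\<forall>x\<in>C. r x = x"
  shows "fg_projective (P\<lparr>lcarrier := C\<rparr>)"
proof -
  have PM: "lmodule P" using fg_projectiveD[OF P] by blast
  have CM: "lmodule (P\<lparr>lcarrier := C\<rparr>)" by (rule submodule_lmodule[OF PM C])
  have Csub: "C \<subseteq> lcarrier P" using submoduleD(1)[OF C] .
  have onto: "r ` lcarrier P = lcarrier (P\<lparr>lcarrier := C\<rparr>)"
  proof
    show "r ` lcarrier P \<subseteq> lcarrier (P\<lparr>lcarrier := C\<rparr>)" using lhom_closed[OF r] by blast
    show "lcarrier (P\<lparr>lcarrier := C\<rparr>) \<subseteq> r ` lcarrier P"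
    proof
      fix x assume "x \<in> lcarrier (P\<lparr>lcarrier := C\<rparr>)"
      hence x: "x \<in> C" by simp
      hence "r x = x" using rid by blast
      thus "x \<in> r ` lcarrier P" using x Csub by (metis image_eqI subsetD)
    qed
  qed
  have fg: "fin_gen (P\<lparr>lcarrier := C\<rparr>)"
    by (rule fin_gen_image[OF PM CM r onto fg_projectiveD(2)[OF P]])
  show ?thesis unfolding fg_projective_def
  proof (intro conjI CM fg allI impI)
    fix X Y :: "('a, nat \<Rightarrow> 'a) lmod" and g f
    assume H: "lmodule X \<and> lmodule Y \<and> g \<in> lhom X Y \<and> g ` lcarrier X = lcarrier Y \<and> f \<in> lhom (P\<lparr>lcarrier := C\<rparr>) Y"
    have X: "lmodule X" and Y: "lmodule Y" and g: "g \<in> lhom X Y" and go: "g ` lcarrier X = lcarrier Y"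
      and f: "f \<in> lhom (P\<lparr>lcarrier := C\<rparr>) Y" using H by blast+
    have fr: "(\<lambda>x. f (r x)) \<in> lhom P Y" by (rule lhom_comp[OF r f])
    obtain h where h: "h \<in> lhom P X" and hh: "\<forall>x\<in>lcarrier P. g (h x) = f (r x)"
      using fg_projectiveD(3)[OF P X Y g go fr] by blast
    have "h \<in> lhom (P\<lparr>lcarrier := C\<rparr>) X" using lhom_restrict[OF Csub h] .
    moreover have "\<forall>x\<in>lcarrier (P\<lparr>lcarrier := C\<rparr>). g (h x) = f x"
      using hh rid Csub by auto
    ultimately show "\<exists>h\<in>lhom (P\<lparr>lcarrier := C\<rparr>) X. \<forall>x\<in>lcarrier (P\<lparr>lcarrier := C\<rparr>). g (h x) = f x"
      by blast
  qed
qed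

text \<open>Direct sums are realised inside \<open>nat \<Rightarrow> 'a\<close> by interleaving: the even coordinates carry
  the first summand, the odd coordinates the second.\<close>

definition enc :: "(nat \<Rightarrow> 'a) \<Rightarrow> (nat \<Rightarrow> 'a) \<Rightarrow> nat \<Rightarrow> 'a" where
  "enc x y = (\<lambda>j. if even j then x (j div 2) else y (j div 2))"
definition dfst :: "(nat \<Rightarrow> 'a) \<Rightarrow> nat \<Rightarrow> 'a" where "dfst z = (\<lambda>j. z (2 * j))"
definition dsnd :: "(nat \<Rightarrow> 'a) \<Rightarrow> nat \<Rightarrow> 'a" where "dsnd z = (\<lambda>j. z (2 * j + 1))"

lemma dfst_enc[simp]: "dfst (enc x y) = x" and dsnd_enc[simp]: "dsnd (enc x y) = y"
  unfolding enc_def dfst_def dsnd_def by auto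

lemma enc_dfst_dsnd[simp]: "enc (dfst z) (dsnd z) = z"
proof
  fix j :: nat
  show "enc (dfst z) (dsnd z) j = z j"
  proof (cases "even j")
    case True thus ?thesis unfolding enc_def dfst_def by simp
  next
    case False
    hence "2 * (j div 2) + 1 = j" by presburger
    thus ?thesis using False unfolding enc_def dsnd_def by simp
  qed
qed

lemma enc_inj[simp]: "enc x y = enc x' y' \<longleftrightarrow> x = x' \<and> y = y'"
  by (metis dfst_enc dsnd_enc)

definition dsum :: "('a::ring_1, nat \<Rightarrow> 'a) lmod \<Rightarrow> ('a, nat \<Rightarrow> 'a) lmod \<Rightarrow> ('a, nat \<Rightarrow> 'a) lmod" where
  "dsum P Q = \<lparr>lcarrier = {z. dfst z \<in> lcarrier P \<and> dsnd z \<in> lcarrier Q},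
     ladd = (\<lambda>z w. enc (ladd P (dfst z) (dfst w)) (ladd Q (dsnd z) (dsnd w))),
     lzero = enc (lzero P) (lzero Q),
     lsmult = (\<lambda>a z. enc (lsmult P a (dfst z)) (lsmult Q a (dsnd z)))\<rparr>"

lemma dsum_carrier: "z \<in> lcarrier (dsum P Q) \<longleftrightarrow> dfst z \<in> lcarrier P \<and> dsnd z \<in> lcarrier Q"
  unfolding dsum_def by simp

lemma lcarrier_dsum: "lcarrier (dsum P Q) = {z. dfst z \<in> lcarrier P \<and> dsnd z \<in> lcarrier Q}"
  unfolding dsum_def by simp

lemma dsum_simps[simp]:
  "ladd (dsum P Q) z w = enc (ladd P (dfst z) (dfst w)) (ladd Q (dsnd z) (dsnd w))"
  "lzero (dsum P Q) = enc (lzero P) (lzero Q)"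
  "lsmult (dsum P Q) a z = enc (lsmult P a (dfst z)) (lsmult Q a (dsnd z))"
  unfolding dsum_def by auto

lemma dsum_lsub: "lsub (dsum P Q) z w = enc (lsub P (dfst z) (dfst w)) (lsub Q (dsnd z) (dsnd w))"
  unfolding lsub_def by simp

lemma dsum_lmodule:
  assumes P: "lmodule P" and Q: "lmodule Q"
  shows "lmodule (dsum P Q)"
  unfolding lmodule_def lcarrier_dsum
proof (intro conjI ballI allI)
  fix x assume x: "x \<in> {z. dfst z \<in> lcarrier P \<and> dsnd z \<in> lcarrier Q}"
  show "\<exists>y\<in>{z. dfst z \<in> lcarrier P \<and> dsnd z \<in> lcarrier Q}. ladd (dsum P Q) x y = lzero (dsum P Q)"
    by (rule bexI[of _ "enc (lsmult P (-1) (dfst x)) (lsmult Q (-1) (dsnd x))"])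
       (use x P Q in \<open>auto simp: lneg_r lsmult_closed\<close>)
next
  fix x y assume "x \<in> {z. dfst z \<in> lcarrier P \<and> dsnd z \<in> lcarrier Q}" "y \<in> {z. dfst z \<in> lcarrier P \<and> dsnd z \<in> lcarrier Q}"
  thus "ladd (dsum P Q) x y = ladd (dsum P Q) y x" using P Q by (simp, metis ladd_comm)
qed (use P Q in \<open>auto simp: lzero_closed ladd_closed lsmult_closed ladd_assoc lzero_l lsmult_add_r lsmult_add_l lsmult_assoc lsmult_one\<close>)

lemma dfst_hom: "dfst \<in> lhom (dsum P Q) P"
  and dsnd_hom: "dsnd \<in> lhom (dsum P Q) Q"
  unfolding lhom_def by (auto simp: dsum_carrier)

lemma inl_hom: "lmodule Q \<Longrightarrow> (\<lambda>x. enc x (lzero Q)) \<in> lhom P (dsum P Q)"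
  and inr_hom: "lmodule P \<Longrightarrow> (\<lambda>y. enc (lzero P) y) \<in> lhom Q (dsum P Q)"
  unfolding lhom_def by (auto simp: dsum_carrier lzero_closed lzero_l lsmult_zero_r)

lemma enc_hom:
  assumes "f \<in> lhom M P" "g \<in> lhom M Q"
  shows "(\<lambda>x. enc (f x) (g x)) \<in> lhom M (dsum P Q)"
  using assms unfolding lhom_def by (auto simp: dsum_carrier)

lemma enc_split: "lmodule P \<Longrightarrow> lmodule Q \<Longrightarrow> x \<in> lcarrier P \<Longrightarrow> y \<in> lcarrier Q \<Longrightarrow>
  enc x y = ladd (dsum P Q) (enc x (lzero Q)) (enc (lzero P) y)"
  by (simp add: lzero_l lzero_r)

lemma dsum_fin_gen:
  assumes P: "lmodule P" and Q: "lmodule Q" and fP: "fin_gen P" and fQ: "fin_gen Q"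
  shows "fin_gen (dsum P Q)"
proof -
  from fP obtain S1 where S11: "finite S1" and S12: "S1 \<subseteq> lcarrier P"
    and S13: "\<forall>T. submodule T P \<and> S1 \<subseteq> T \<longrightarrow> T = lcarrier P"
    unfolding fin_gen_def by blast
  from fQ obtain S2 where S21: "finite S2" and S22: "S2 \<subseteq> lcarrier Q"
    and S23: "\<forall>T. submodule T Q \<and> S2 \<subseteq> T \<longrightarrow> T = lcarrier Q"
    unfolding fin_gen_def by blast
  define il where "il = (\<lambda>x. enc x (lzero Q))"
  define ir where "ir = (\<lambda>y. enc (lzero P) y)"
  have DM: "lmodule (dsum P Q)" using P Q by (rule dsum_lmodule)
  have ilh: "il \<in> lhom P (dsum P Q)" unfolding il_def by (rule inl_hom[OF Q])
  have irh: "ir \<in> lhom Q (dsum P Q)" unfolding ir_def by (rule inr_hom[OF P])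
  have "\<forall>T. submodule T (dsum P Q) \<and> il ` S1 \<union> ir ` S2 \<subseteq> T \<longrightarrow> T = lcarrier (dsum P Q)"
  proof (intro allI impI)
    fix T assume T: "submodule T (dsum P Q) \<and> il ` S1 \<union> ir ` S2 \<subseteq> T"
    have T1: "submodule T (dsum P Q)" and T2: "il ` S1 \<subseteq> T" and T3: "ir ` S2 \<subseteq> T" using T by blast+
    have "submodule {x \<in> lcarrier P. il x \<in> T} P" by (rule preimage_submodule[OF P DM ilh T1])
    moreover have "S1 \<subseteq> {x \<in> lcarrier P. il x \<in> T}" using S12 T2 by blast
    ultimately have E1: "{x \<in> lcarrier P. il x \<in> T} = lcarrier P" using S13 by blast
    have "submodule {x \<in> lcarrier Q. ir x \<in> T} Q" by (rule preimage_submodule[OF Q DM irh T1])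
    moreover have "S2 \<subseteq> {x \<in> lcarrier Q. ir x \<in> T}" using S22 T3 by blast
    ultimately have E2: "{x \<in> lcarrier Q. ir x \<in> T} = lcarrier Q" using S23 by blast
    show "T = lcarrier (dsum P Q)"
    proof
      show "T \<subseteq> lcarrier (dsum P Q)" using submoduleD(1)[OF T1] .
      show "lcarrier (dsum P Q) \<subseteq> T"
      proof
        fix z assume z: "z \<in> lcarrier (dsum P Q)"
        hence z1: "dfst z \<in> lcarrier P" and z2: "dsnd z \<in> lcarrier Q" by (auto simp: dsum_carrier)
        have a: "il (dfst z) \<in> T" using z1 E1 by blast
        have b: "ir (dsnd z) \<in> T" using z2 E2 by blast
        have "z = ladd (dsum P Q) (il (dfst z)) (ir (dsnd z))"
          using enc_split[OF P Q z1 z2] unfolding il_def ir_def by simp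
        thus "z \<in> T" using submoduleD(3)[OF T1 a b] by simp
      qed
    qed
  qed
  moreover have "il ` S1 \<union> ir ` S2 \<subseteq> lcarrier (dsum P Q)"
    using S12 S22 lhom_closed[OF ilh] lhom_closed[OF irh] by blast
  moreover have "finite (il ` S1 \<union> ir ` S2)" using S11 S21 by blast
  ultimately show ?thesis unfolding fin_gen_def by blast
qed

lemma fg_projective_dsum:
  assumes P: "fg_projective P" and Q: "fg_projective Q"
  shows "fg_projective (dsum P Q)"
proof -
  have PM: "lmodule P" and QM: "lmodule Q" using P Q fg_projectiveD by blast+
  show ?thesis unfolding fg_projective_def
  proof (intro conjI allI impI)
    show "lmodule (dsum P Q)" using PM QM by (rule dsum_lmodule)
    show "fin_gen (dsum P Q)" using PM QM fg_projectiveD(2)[OF P] fg_projectiveD(2)[OF Q] by (rule dsum_fin_gen)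
    fix X Y :: "('a, nat \<Rightarrow> 'a) lmod" and g f
    assume H: "lmodule X \<and> lmodule Y \<and> g \<in> lhom X Y \<and> g ` lcarrier X = lcarrier Y \<and> f \<in> lhom (dsum P Q) Y"
    have X: "lmodule X" and Y: "lmodule Y" and g: "g \<in> lhom X Y" and go: "g ` lcarrier X = lcarrier Y"
      and f: "f \<in> lhom (dsum P Q) Y" using H by blast+
    have f1: "(\<lambda>x. f (enc x (lzero Q))) \<in> lhom P Y" by (rule lhom_comp[OF inl_hom[OF QM] f])
    have f2: "(\<lambda>y. f (enc (lzero P) y)) \<in> lhom Q Y" by (rule lhom_comp[OF inr_hom[OF PM] f])
    obtain h1 where h1: "h1 \<in> lhom P X" and h1e: "\<forall>x\<in>lcarrier P. g (h1 x) = f (enc x (lzero Q))"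
      using fg_projectiveD(3)[OF P X Y g go f1] by blast
    obtain h2 where h2: "h2 \<in> lhom Q X" and h2e: "\<forall>y\<in>lcarrier Q. g (h2 y) = f (enc (lzero P) y)"
      using fg_projectiveD(3)[OF Q X Y g go f2] by blast
    let ?h = "\<lambda>z. ladd X (h1 (dfst z)) (h2 (dsnd z))"
    have hh: "?h \<in> lhom (dsum P Q) X"
      by (rule lhom_ladd[OF X lhom_comp[OF dfst_hom h1] lhom_comp[OF dsnd_hom h2]])
    show "\<exists>h\<in>lhom (dsum P Q) X. \<forall>x\<in>lcarrier (dsum P Q). g (h x) = f x"
    proof (intro bexI[OF _ hh] ballI)
      fix z assume z: "z \<in> lcarrier (dsum P Q)"
      hence z1: "dfst z \<in> lcarrier P" and z2: "dsnd z \<in> lcarrier Q" by (auto simp: dsum_carrier)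
      have i1: "enc (dfst z) (lzero Q) \<in> lcarrier (dsum P Q)" using z1 QM by (simp add: dsum_carrier lzero_closed)
      have i2: "enc (lzero P) (dsnd z) \<in> lcarrier (dsum P Q)" using z2 PM by (simp add: dsum_carrier lzero_closed)
      have "g (?h z) = ladd Y (g (h1 (dfst z))) (g (h2 (dsnd z)))"
        using lhom_add[OF g lhom_closed[OF h1 z1] lhom_closed[OF h2 z2]] .
      also have "\<dots> = ladd Y (f (enc (dfst z) (lzero Q))) (f (enc (lzero P) (dsnd z)))" using h1e h2e z1 z2 by simp
      also have "\<dots> = f (ladd (dsum P Q) (enc (dfst z) (lzero Q)) (enc (lzero P) (dsnd z)))"
        using lhom_add[OF f i1 i2] by simp
      also have "\<dots> = f z" using enc_split[OF PM QM z1 z2] by simp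
      finally show "g (?h z) = f z" .
    qed
  qed
qed

text \<open>The definition of \<^const>\<open>fg_projective\<close> only lifts along epimorphisms between modules
  with elements in \<open>nat \<Rightarrow> 'a\<close>; pulling an arbitrary epimorphism back to a fibre product inside
  \<open>P \<oplus> X\<close> gives lifting along epimorphisms onto modules of any type.\<close>

lemma fg_projective_lift:
  fixes P X :: "('a::ring_1, nat \<Rightarrow> 'a) lmod" and Y :: "('a, 'y) lmod"
  assumes P: "fg_projective P" and X: "lmodule X" and Y: "lmodule Y" and g: "g \<in> lhom X Y"
    and go: "g ` lcarrier X = lcarrier Y" and f: "f \<in> lhom P Y"
  shows "\<exists>h\<in>lhom P X. \<forall>x\<in>lcarrier P. g (h x) = f x"
proof -
  have PM: "lmodule P" using fg_projectiveD(1)[OF P] .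
  define D where "D = dsum P X"
  have DM: "lmodule D" unfolding D_def by (rule dsum_lmodule[OF PM X])
  define Ec where "Ec = {z \<in> lcarrier D. f (dfst z) = g (dsnd z)}"
  have Esub: "submodule Ec D"
    unfolding submodule_def
  proof (intro conjI ballI allI)
    show "Ec \<subseteq> lcarrier D" unfolding Ec_def by blast
    show "lzero D \<in> Ec" unfolding Ec_def D_def
      using PM X Y f g by (simp add: lzero_closed lhom_zero dsum_carrier)
    fix z w assume z: "z \<in> Ec" and w: "w \<in> Ec"
    have z1: "dfst z \<in> lcarrier P" "dsnd z \<in> lcarrier X" and w1: "dfst w \<in> lcarrier P" "dsnd w \<in> lcarrier X"
      using z w unfolding Ec_def D_def dsum_carrier by auto
    show "ladd D z w \<in> Ec"
      using z w z1 w1 PM X unfolding Ec_def D_def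
      by (simp add: dsum_carrier ladd_closed lhom_add[OF f] lhom_add[OF g])
  next
    fix a z assume z: "z \<in> Ec"
    have z1: "dfst z \<in> lcarrier P" "dsnd z \<in> lcarrier X"
      using z unfolding Ec_def D_def dsum_carrier by auto
    show "lsmult D a z \<in> Ec"
      using z z1 PM X unfolding Ec_def D_def
      by (simp add: dsum_carrier lsmult_closed lhom_smult[OF f] lhom_smult[OF g])
  qed
  define E where "E = D\<lparr>lcarrier := Ec\<rparr>"
  have EM: "lmodule E" unfolding E_def by (rule submodule_lmodule[OF DM Esub])
  have Ecs: "Ec \<subseteq> lcarrier D" using submoduleD(1)[OF Esub] .
  have p1: "dfst \<in> lhom E P" unfolding E_def D_def
    using lhom_restrict[OF Ecs[unfolded D_def] dfst_hom] .
  have p2: "dsnd \<in> lhom E X" unfolding E_def D_def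
    using lhom_restrict[OF Ecs[unfolded D_def] dsnd_hom] .
  have onto: "dfst ` lcarrier E = lcarrier P"
  proof
    show "dfst ` lcarrier E \<subseteq> lcarrier P" using lhom_closed[OF p1] by blast
    show "lcarrier P \<subseteq> dfst ` lcarrier E"
    proof
      fix x assume x: "x \<in> lcarrier P"
      hence "f x \<in> g ` lcarrier X" using go lhom_closed[OF f] by blast
      then obtain y where y: "y \<in> lcarrier X" "f x = g y" by blast
      have "enc x y \<in> lcarrier E" unfolding E_def Ec_def D_def using x y by (simp add: dsum_carrier)
      thus "x \<in> dfst ` lcarrier E" by (metis dfst_enc image_eqI)
    qed
  qed
  obtain h0 where h0: "h0 \<in> lhom P E" and h0e: "\<forall>x\<in>lcarrier P. dfst (h0 x) = x"
    using fg_projectiveD(3)[OF P EM PM p1 onto lhom_id] by blast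
  show ?thesis
  proof (intro bexI[of _ "\<lambda>x. dsnd (h0 x)"] ballI)
    show "(\<lambda>x. dsnd (h0 x)) \<in> lhom P X" by (rule lhom_comp[OF h0 p2])
    fix x assume x: "x \<in> lcarrier P"
    have "h0 x \<in> Ec" using lhom_closed[OF h0 x] unfolding E_def by simp
    hence "f (dfst (h0 x)) = g (dsnd (h0 x))" unfolding Ec_def by blast
    thus "g (dsnd (h0 x)) = f x" using h0e x by simp
  qed
qed

definition freemod :: "nat \<Rightarrow> ('a::ring_1, nat \<Rightarrow> 'a) lmod" where
  "freemod m = \<lparr>lcarrier = {a. \<forall>j\<ge>m. a j = 0}, ladd = (\<lambda>a b j. a j + b j), lzero = (\<lambda>j. 0),
     lsmult = (\<lambda>c a j. c * a j)\<rparr>"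

lemma freemod_simps[simp]:
  "lcarrier (freemod m) = {a. \<forall>j\<ge>m. a j = 0}" "ladd (freemod m) = (\<lambda>a b j. a j + b j)"
  "lzero (freemod m) = (\<lambda>j. 0)" "lsmult (freemod m) = (\<lambda>c a j. c * a j)"
  unfolding freemod_def by auto

lemma freemod_lmodule: "lmodule (freemod m :: ('a::ring_1, nat \<Rightarrow> 'a) lmod)"
  unfolding lmodule_def freemod_simps
  by (auto simp: algebra_simps intro!: ext) (rule_tac x="\<lambda>j. - x j" in exI, auto)

primrec lcomb :: "('a::ring_1, 'm) lmod \<Rightarrow> 'm list \<Rightarrow> (nat \<Rightarrow> 'a) \<Rightarrow> 'm" where
  "lcomb Q [] a = lzero Q"
| "lcomb Q (s # ss) a = ladd Q (lsmult Q (a 0) s) (lcomb Q ss (\<lambda>j. a (Suc j)))"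

lemma lcomb_closed: "lmodule Q \<Longrightarrow> set ss \<subseteq> lcarrier Q \<Longrightarrow> lcomb Q ss a \<in> lcarrier Q"
  by (induction ss arbitrary: a) (auto simp: lzero_closed ladd_closed lsmult_closed)

lemma lcomb_add: "lmodule Q \<Longrightarrow> set ss \<subseteq> lcarrier Q \<Longrightarrow>
   lcomb Q ss (\<lambda>j. a j + b j) = ladd Q (lcomb Q ss a) (lcomb Q ss b)"
proof (induction ss arbitrary: a b)
  case Nil thus ?case by (simp add: lzero_l lzero_closed)
next
  case (Cons s ss)
  have s: "s \<in> lcarrier Q" and ss: "set ss \<subseteq> lcarrier Q" using Cons.prems by auto
  show ?case using Cons.prems(1) s ss
    by (simp add: Cons.IH lsmult_add_l ladd_4 lsmult_closed lcomb_closed)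
qed

lemma lcomb_smult: "lmodule Q \<Longrightarrow> set ss \<subseteq> lcarrier Q \<Longrightarrow>
   lcomb Q ss (\<lambda>j. c * a j) = lsmult Q c (lcomb Q ss a)"
proof (induction ss arbitrary: a)
  case Nil thus ?case by (simp add: lsmult_zero_r)
next
  case (Cons s ss)
  have s: "s \<in> lcarrier Q" and ss: "set ss \<subseteq> lcarrier Q" using Cons.prems by auto
  show ?case using Cons.prems(1) s ss
    by (simp add: Cons.IH lsmult_add_r lsmult_assoc lsmult_closed lcomb_closed)
qed

lemma lcomb_zero: "lmodule Q \<Longrightarrow> set ss \<subseteq> lcarrier Q \<Longrightarrow> lcomb Q ss (\<lambda>j. 0) = lzero Q"
  by (induction ss) (auto simp: lsmult_zero_l lzero_l lzero_closed)

lemma lcomb_delta: "lmodule Q \<Longrightarrow> set ss \<subseteq> lcarrier Q \<Longrightarrow> k < length ss \<Longrightarrow>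
   lcomb Q ss (\<lambda>j. if j = k then 1 else 0) = ss ! k"
proof (induction ss arbitrary: k)
  case Nil thus ?case by simp
next
  case (Cons s ss)
  have s: "s \<in> lcarrier Q" and ss: "set ss \<subseteq> lcarrier Q" using Cons.prems by auto
  show ?case
  proof (cases k)
    case 0 thus ?thesis using Cons.prems(1) s ss by (simp add: lsmult_one lcomb_zero lzero_r)
  next
    case (Suc k')
    have "(\<lambda>j. if Suc j = k then 1 else 0) = (\<lambda>j. if j = k' then (1::'a) else 0)" using Suc by auto
    thus ?thesis using Cons.prems Suc s ss Cons.IH[of k']
      by (simp add: lsmult_zero_l lzero_l lcomb_closed nth_mem subsetD)
  qed
qed

lemma lcomb_hom: "lmodule Q \<Longrightarrow> set ss \<subseteq> lcarrier Q \<Longrightarrow> (\<lambda>a. lcomb Q ss a) \<in> lhom (freemod m) Q"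
  unfolding lhom_def by (simp add: lcomb_closed lcomb_add lcomb_smult)

lemma fg_free_cover:
  fixes Q :: "('a::ring_1, nat \<Rightarrow> 'a) lmod"
  assumes Q: "lmodule Q" and fg: "fin_gen Q"
  shows "\<exists>m \<pi>. \<pi> \<in> lhom (freemod m) Q \<and> \<pi> ` lcarrier (freemod m) = lcarrier Q"
proof -
  from fg obtain S where S1: "finite S" and S2: "S \<subseteq> lcarrier Q"
    and S3: "\<forall>T. submodule T Q \<and> S \<subseteq> T \<longrightarrow> T = lcarrier Q"
    unfolding fin_gen_def by blast
  obtain ss where ss: "set ss = S" using finite_list[OF S1] by blast
  define m where "m = length ss"
  define \<pi> where "\<pi> = (\<lambda>a. lcomb Q ss a)"
  have h: "\<pi> \<in> lhom (freemod m) Q" unfolding \<pi>_def using lcomb_hom[OF Q] ss S2 by blast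
  have sub: "submodule (\<pi> ` lcarrier (freemod m)) Q" by (rule image_submodule[OF freemod_lmodule Q h])
  have "S \<subseteq> \<pi> ` lcarrier (freemod m)"
  proof
    fix s assume "s \<in> S"
    then obtain k where k: "k < length ss" "ss ! k = s" using ss by (metis in_set_conv_nth)
    have "\<pi> (\<lambda>j. if j = k then 1 else 0) = s" unfolding \<pi>_def using lcomb_delta[OF Q _ k(1)] ss S2 k(2) by blast
    moreover have "(\<lambda>j. if j = k then 1 else 0) \<in> lcarrier (freemod m)" using k(1) unfolding m_def by simp
    ultimately show "s \<in> \<pi> ` lcarrier (freemod m)" by (metis image_eqI)
  qed
  hence "\<pi> ` lcarrier (freemod m) = lcarrier Q" using S3 sub by blast
  thus ?thesis using h by blast
qed

definition duals_extend :: "('a::ring_1, 'p) lmod \<Rightarrow> ('a, 'p) lmod \<Rightarrow> bool" where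
  "duals_extend X P \<longleftrightarrow> (\<forall>\<phi>\<in>lhom X regmod. \<exists>\<psi>\<in>lhom P regmod. \<forall>x\<in>lcarrier X. \<psi> x = \<phi> x)"

text \<open>\<open>Q\<close> is a retract of a free module \<open>A\<^sup>m\<close>, so a map into \<open>Q\<close> is given by \<open>m\<close> coordinate
  functionals, each of which extends.\<close>

lemma duals_extend_lhom_projective:
  fixes X :: "('a::ring_1, 'p) lmod" and P :: "('a, 'p) lmod" and Q :: "('a, nat \<Rightarrow> 'a) lmod"
  assumes X: "lmodule X" and P: "lmodule P" and Q: "fg_projective Q"
    and ext: "duals_extend X P"
    and \<phi>: "\<phi> \<in> lhom X Q"
  shows "\<exists>\<psi>\<in>lhom P Q. \<forall>x\<in>lcarrier X. \<psi> x = \<phi> x"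
proof -
  have QM: "lmodule Q" using fg_projectiveD(1)[OF Q] .
  obtain m \<pi> where \<pi>: "\<pi> \<in> lhom (freemod m) Q" and \<pi>o: "\<pi> ` lcarrier (freemod m) = lcarrier Q"
    using fg_free_cover[OF QM fg_projectiveD(2)[OF Q]] by blast
  obtain \<sigma> where \<sigma>: "\<sigma> \<in> lhom Q (freemod m)" and \<sigma>e: "\<forall>q\<in>lcarrier Q. \<pi> (\<sigma> q) = q"
    using fg_projectiveD(3)[OF Q freemod_lmodule QM \<pi> \<pi>o lhom_id] by blast
  have coord: "\<And>j. (\<lambda>x. \<sigma> (\<phi> x) j) \<in> lhom X regmod"
  proof -
    fix j
    have "(\<lambda>a. a j) \<in> lhom (freemod m) (regmod :: ('a, 'a) lmod)" unfolding lhom_def by simp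
    thus "(\<lambda>x. \<sigma> (\<phi> x) j) \<in> lhom X regmod" using lhom_comp[OF lhom_comp[OF \<phi> \<sigma>]] by blast
  qed
  have "\<forall>j. \<exists>\<psi>. \<psi> \<in> lhom P regmod \<and> (\<forall>x\<in>lcarrier X. \<psi> x = \<sigma> (\<phi> x) j)"
  proof
    fix j show "\<exists>\<psi>. \<psi> \<in> lhom P regmod \<and> (\<forall>x\<in>lcarrier X. \<psi> x = \<sigma> (\<phi> x) j)"
      using ext coord[of j] unfolding duals_extend_def by fastforce
  qed
  then obtain \<psi> where \<psi>: "\<And>j. \<psi> j \<in> lhom P regmod" and \<psi>e: "\<And>j x. x \<in> lcarrier X \<Longrightarrow> \<psi> j x = \<sigma> (\<phi> x) j"
    by metis
  define \<Psi> where "\<Psi> = (\<lambda>y j. if j < m then \<psi> j y else 0)"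
  have \<Psi>h: "\<Psi> \<in> lhom P (freemod m)"
    unfolding lhom_def \<Psi>_def using \<psi> by (auto simp: lhom_regmod_iff intro!: ext)
  have \<Psi>e: "\<And>x. x \<in> lcarrier X \<Longrightarrow> \<Psi> x = \<sigma> (\<phi> x)"
  proof -
    fix x assume x: "x \<in> lcarrier X"
    have "\<sigma> (\<phi> x) \<in> lcarrier (freemod m)" using lhom_closed[OF \<sigma> lhom_closed[OF \<phi> x]] .
    thus "\<Psi> x = \<sigma> (\<phi> x)" unfolding \<Psi>_def using \<psi>e[OF x] by (auto intro!: ext)
  qed
  show ?thesis
  proof (intro bexI[of _ "\<lambda>y. \<pi> (\<Psi> y)"] ballI)
    show "(\<lambda>y. \<pi> (\<Psi> y)) \<in> lhom P Q" by (rule lhom_comp[OF \<Psi>h \<pi>])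
    fix x assume x: "x \<in> lcarrier X"
    show "\<pi> (\<Psi> x) = \<phi> x" using \<Psi>e[OF x] \<sigma>e lhom_closed[OF \<phi> x] by simp
  qed
qed

section \<open>Comparing syzygies of two presentations\<close>

text \<open>\<open>C \<subseteq> P\<close> and \<open>K \<subseteq> R\<close> are syzygies of the same module taken in two projective presentations.
  The maps \<open>\<alpha>\<close> and \<open>\<beta>\<close> compare them, and \<open>1 - \<beta>\<alpha>\<close> on \<open>C\<close> extends to a map \<open>P \<rightarrow> C\<close>, so it
  factors through the projective \<open>P\<close>.\<close>

definition syzygy_comparison ::
  "('a::ring_1, nat \<Rightarrow> 'a) lmod \<Rightarrow> (nat \<Rightarrow> 'a) set \<Rightarrow> ('a, nat \<Rightarrow> 'a) lmod \<Rightarrow> (nat \<Rightarrow> 'a) set \<Rightarrow> bool" where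
  "syzygy_comparison P C R K \<longleftrightarrow> (\<exists>\<alpha> \<beta> t. \<alpha> \<in> lhom P R \<and> \<beta> \<in> lhom R P \<and>
     (\<forall>x\<in>C. \<alpha> x \<in> K) \<and> (\<forall>y\<in>K. \<beta> y \<in> C) \<and>
     t \<in> lhom P (P\<lparr>lcarrier := C\<rparr>) \<and> (\<forall>x\<in>C. t x = lsub P x (\<beta> (\<alpha> x))))"

lemma syzygy_comparison_base:
  fixes P R :: "('a::ring_1, nat \<Rightarrow> 'a) lmod" and M :: "('a, 'm) lmod"
  assumes P: "fg_projective P" and R: "fg_projective R" and M: "lmodule M"
    and p: "p \<in> lhom P M" and po: "p ` lcarrier P = lcarrier M"
    and e: "e \<in> lhom R M" and eo: "e ` lcarrier R = lcarrier M"
  shows "syzygy_comparison P {x \<in> lcarrier P. p x = lzero M} R {y \<in> lcarrier R. e y = lzero M}"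
proof -
  have PM: "lmodule P" and RM: "lmodule R" using P R fg_projectiveD(1) by blast+
  obtain \<alpha> where \<alpha>: "\<alpha> \<in> lhom P R" and \<alpha>e: "\<forall>x\<in>lcarrier P. e (\<alpha> x) = p x"
    using fg_projective_lift[OF P RM M e eo p] by blast
  obtain \<beta> where \<beta>: "\<beta> \<in> lhom R P" and \<beta>e: "\<forall>y\<in>lcarrier R. p (\<beta> y) = e y"
    using fg_projective_lift[OF R PM M p po e] by blast
  define t where "t = (\<lambda>x. lsub P x (\<beta> (\<alpha> x)))"
  have t: "t \<in> lhom P P" unfolding t_def by (rule lhom_lsub[OF PM lhom_id lhom_comp[OF \<alpha> \<beta>]])
  have "p (t x) = lzero M" if x: "x \<in> lcarrier P" for x
  proof -
    have "p (t x) = lsub M (p x) (p (\<beta> (\<alpha> x)))"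
      unfolding t_def using lhom_sub[OF p x lhom_closed[OF \<beta> lhom_closed[OF \<alpha> x]] PM] .
    thus ?thesis using \<beta>e \<alpha>e x lhom_closed[OF \<alpha> x] lsub_self[OF M lhom_closed[OF p x]] by simp
  qed
  hence "t \<in> lhom P (P\<lparr>lcarrier := {x \<in> lcarrier P. p x = lzero M}\<rparr>)"
    using t lhom_closed[OF t] by (subst lhom_restrict_target_iff) auto
  thus ?thesis unfolding syzygy_comparison_def t_def
    using \<alpha> \<beta> \<alpha>e \<beta>e lhom_closed[OF \<alpha>] lhom_closed[OF \<beta>]
    by (intro exI[of _ \<alpha>] exI[of _ \<beta>] exI) auto
qed

text \<open>The comparison passes to the next syzygies: lift \<open>\<alpha>\<close>, \<open>\<beta>\<close> and \<open>t\<close> along the presentations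
  and correct \<open>1 - \<beta>'\<alpha>'\<close> by the lift of \<open>t\<close>.\<close>

lemma syzygy_comparison_step:
  fixes P P' R R' :: "('a::ring_1, nat \<Rightarrow> 'a) lmod"
  assumes P: "fg_projective P" and P': "fg_projective P'" and R: "fg_projective R" and R': "lmodule R'"
    and C: "submodule C P" and p: "p \<in> lhom P' (P\<lparr>lcarrier := C\<rparr>)" and po: "p ` lcarrier P' = C"
    and r: "r \<in> lhom R R'" and cmp: "syzygy_comparison P C R' (r ` lcarrier R)"
  shows "syzygy_comparison P' {y \<in> lcarrier P'. p y = lzero P} R {x \<in> lcarrier R. r x = lzero R'}"
proof -
  from cmp obtain \<alpha> \<beta> t where \<alpha>: "\<alpha> \<in> lhom P R'" and \<beta>: "\<beta> \<in> lhom R' P"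
    and \<alpha>C: "\<forall>x\<in>C. \<alpha> x \<in> r ` lcarrier R" and \<beta>K: "\<forall>y\<in>r ` lcarrier R. \<beta> y \<in> C"
    and t: "t \<in> lhom P (P\<lparr>lcarrier := C\<rparr>)" and te: "\<forall>x\<in>C. t x = lsub P x (\<beta> (\<alpha> x))"
    unfolding syzygy_comparison_def by blast
  have PM: "lmodule P" and P'M: "lmodule P'" and RM: "lmodule R" using P P' R fg_projectiveD(1) by blast+
  have CM: "lmodule (P\<lparr>lcarrier := C\<rparr>)" by (rule submodule_lmodule[OF PM C])
  have Csub: "C \<subseteq> lcarrier P" using submoduleD(1)[OF C] .
  define K where "K = R'\<lparr>lcarrier := r ` lcarrier R\<rparr>"
  have Ksub: "submodule (r ` lcarrier R) R'" by (rule image_submodule[OF RM R' r])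
  have KM: "lmodule K" unfolding K_def by (rule submodule_lmodule[OF R' Ksub])
  have rK: "r \<in> lhom R K" and rKo: "r ` lcarrier R = lcarrier K"
    unfolding K_def using r submoduleD(1)[OF Ksub] by (auto simp: lhom_restrict_target_iff)
  have \<alpha>K: "\<alpha> \<in> lhom (P\<lparr>lcarrier := C\<rparr>) K"
    unfolding K_def using lhom_restrict[OF Csub \<alpha>] \<alpha>C submoduleD(1)[OF Ksub]
    by (simp add: lhom_restrict_target_iff)
  have \<beta>C: "\<beta> \<in> lhom K (P\<lparr>lcarrier := C\<rparr>)"
    unfolding K_def using lhom_restrict[OF submoduleD(1)[OF Ksub] \<beta>] \<beta>K Csub
    by (simp add: lhom_restrict_target_iff)
  have pP: "p \<in> lhom P' P" and pC: "\<And>y. y \<in> lcarrier P' \<Longrightarrow> p y \<in> C"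
    using p Csub by (auto simp: lhom_restrict_target_iff)
  have poC: "p ` lcarrier P' = lcarrier (P\<lparr>lcarrier := C\<rparr>)" using po by simp
  obtain s where s: "s \<in> lhom P P'" and se: "\<forall>x\<in>lcarrier P. p (s x) = t x"
    using fg_projective_lift[OF P P'M CM p poC t] by blast
  obtain \<alpha>' where \<alpha>': "\<alpha>' \<in> lhom P' R" and \<alpha>'e: "\<forall>y\<in>lcarrier P'. r (\<alpha>' y) = \<alpha> (p y)"
    using fg_projective_lift[OF P' RM KM rK rKo lhom_comp[OF p \<alpha>K]] by blast
  obtain \<beta>' where \<beta>': "\<beta>' \<in> lhom R P'" and \<beta>'e: "\<forall>x\<in>lcarrier R. p (\<beta>' x) = \<beta> (r x)"
    using fg_projective_lift[OF R P'M CM p poC lhom_comp[OF rK \<beta>C]] by blast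
  define t' where "t' = (\<lambda>y. lsub P' (lsub P' y (\<beta>' (\<alpha>' y))) (s (p y)))"
  have t'P': "t' \<in> lhom P' P'" unfolding t'_def
    by (rule lhom_lsub[OF P'M lhom_lsub[OF P'M lhom_id lhom_comp[OF \<alpha>' \<beta>']] lhom_comp[OF pP s]])
  have "p (t' y) = lzero P" if y: "y \<in> lcarrier P'" for y
  proof -
    have py: "p y \<in> C" using pC[OF y] .
    have b: "\<beta>' (\<alpha>' y) \<in> lcarrier P'" using lhom_closed[OF \<beta>' lhom_closed[OF \<alpha>' y]] .
    have sy: "s (p y) \<in> lcarrier P'" using lhom_closed[OF s] py Csub by blast
    have "p (t' y) = lsub P (lsub P (p y) (p (\<beta>' (\<alpha>' y)))) (p (s (p y)))"
      unfolding t'_def using lhom_sub[OF pP lsub_closed[OF P'M y b] sy P'M] lhom_sub[OF pP y b P'M]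
      by simp
    also have "\<dots> = lsub P (lsub P (p y) (\<beta> (\<alpha> (p y)))) (t (p y))"
      using \<beta>'e \<alpha>'e y lhom_closed[OF \<alpha>' y] se py Csub by auto
    also have "\<dots> = lzero P"
      using te py Csub lsub_self[OF PM lsub_closed[OF PM _ lhom_closed[OF \<beta> lhom_closed[OF \<alpha>]]]] by auto
    finally show ?thesis .
  qed
  hence t': "t' \<in> lhom P' (P'\<lparr>lcarrier := {y \<in> lcarrier P'. p y = lzero P}\<rparr>)"
    using t'P' lhom_closed[OF t'P'] by (subst lhom_restrict_target_iff) auto
  have p0: "p (lzero P') = lzero P" and s0: "s (lzero P) = lzero P'"
    and \<alpha>0: "\<alpha> (lzero P) = lzero R'" and \<beta>0: "\<beta> (lzero R') = lzero P"
    using lhom_zero[OF P'M PM pP] lhom_zero[OF PM P'M s] lhom_zero[OF PM R' \<alpha>] lhom_zero[OF R' PM \<beta>] .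
  have "\<alpha>' y \<in> {x \<in> lcarrier R. r x = lzero R'} \<and> t' y = lsub P' y (\<beta>' (\<alpha>' y))"
    if "y \<in> {y \<in> lcarrier P'. p y = lzero P}" for y
    using that \<alpha>'e \<alpha>0 lhom_closed[OF \<alpha>'] s0
      lsub_zero[OF P'M lsub_closed[OF P'M _ lhom_closed[OF \<beta>' lhom_closed[OF \<alpha>']]]]
    unfolding t'_def by auto
  moreover have "\<beta>' x \<in> {y \<in> lcarrier P'. p y = lzero P}" if "x \<in> {x \<in> lcarrier R. r x = lzero R'}" for x
    using that \<beta>'e \<beta>0 lhom_closed[OF \<beta>'] by auto
  ultimately show ?thesis unfolding syzygy_comparison_def using \<alpha>' \<beta>' t' by blast
qed

text \<open>With the comparison, the vanishing of the cohomology of \<open>Hom(R, A)\<close> at \<open>R\<close> becomes the extension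
  property for the syzygy \<open>C\<close> of the other presentation: \<open>\<phi> \<beta> r\<close> is a cocycle, hence \<open>g r\<close>, and
  \<open>g \<alpha> + \<phi> t\<close> extends \<open>\<phi>\<close>.\<close>

lemma syzygy_comparison_duals_extend:
  fixes P R R' :: "('a::ring_1, nat \<Rightarrow> 'a) lmod" and R'' :: "('a, nat \<Rightarrow> 'a) lmod"
  assumes P: "lmodule P" and C: "submodule C P" and R': "lmodule R'"
    and r: "r \<in> lhom R R'" and rr': "\<forall>x\<in>lcarrier R''. r (r' x) = lzero R'"
    and cmp: "syzygy_comparison P C R' (r ` lcarrier R)"
    and cocycle: "\<forall>f\<in>lhom R regmod. (\<forall>x\<in>lcarrier R''. f (r' x) = 0) \<longrightarrow>
                    (\<exists>g\<in>lhom R' regmod. \<forall>x\<in>lcarrier R. f x = g (r x))"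
  shows "duals_extend (P\<lparr>lcarrier := C\<rparr>) P"
  unfolding duals_extend_def
proof
  fix \<phi> assume \<phi>: "\<phi> \<in> lhom (P\<lparr>lcarrier := C\<rparr>) regmod"
  from cmp obtain \<alpha> \<beta> t where \<alpha>: "\<alpha> \<in> lhom P R'" and \<beta>: "\<beta> \<in> lhom R' P"
    and \<alpha>C: "\<forall>x\<in>C. \<alpha> x \<in> r ` lcarrier R" and \<beta>K: "\<forall>y\<in>r ` lcarrier R. \<beta> y \<in> C"
    and t: "t \<in> lhom P (P\<lparr>lcarrier := C\<rparr>)" and te: "\<forall>x\<in>C. t x = lsub P x (\<beta> (\<alpha> x))"
    unfolding syzygy_comparison_def by blast
  have CM: "lmodule (P\<lparr>lcarrier := C\<rparr>)" by (rule submodule_lmodule[OF P C])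
  have Csub: "C \<subseteq> lcarrier P" using submoduleD(1)[OF C] .
  define f where "f = (\<lambda>x. \<phi> (\<beta> (r x)))"
  have "(\<lambda>x. \<beta> (r x)) \<in> lhom R (P\<lparr>lcarrier := C\<rparr>)"
    using lhom_comp[OF r \<beta>] \<beta>K Csub by (simp add: lhom_restrict_target_iff)
  hence f: "f \<in> lhom R regmod" unfolding f_def by (rule lhom_comp[OF _ \<phi>])
  have "f (r' x) = 0" if "x \<in> lcarrier R''" for x
    unfolding f_def using rr' that lhom_zero[OF R' P \<beta>] lhom_zero[OF CM regmod_lmodule \<phi>] by simp
  then obtain g where g: "g \<in> lhom R' regmod" and ge: "\<forall>x\<in>lcarrier R. f x = g (r x)"
    using cocycle f by blast
  have "(\<lambda>y. ladd regmod (g (\<alpha> y)) (\<phi> (t y))) \<in> lhom P regmod"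
    by (rule lhom_ladd[OF regmod_lmodule lhom_comp[OF \<alpha> g] lhom_comp[OF t \<phi>]])
  moreover have "g (\<alpha> x) + \<phi> (t x) = \<phi> x" if x: "x \<in> C" for x
  proof -
    obtain y where y: "y \<in> lcarrier R" "\<alpha> x = r y" using \<alpha>C x by blast
    have \<beta>\<alpha>: "\<beta> (\<alpha> x) \<in> C" using \<beta>K y by simp
    have "\<phi> (t x) = \<phi> x - \<phi> (\<beta> (\<alpha> x))"
      using te x lhom_sub[OF \<phi>, of x "\<beta> (\<alpha> x)"] \<beta>\<alpha> CM by (simp add: lsub_def)
    thus ?thesis using ge y unfolding f_def by simp
  qed
  ultimately show "\<exists>\<psi>\<in>lhom P regmod. \<forall>x\<in>lcarrier (P\<lparr>lcarrier := C\<rparr>). \<psi> x = \<phi> x"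
    by (intro bexI) auto
qed

section \<open>Chains of syzygies\<close>

lemma proj_resolutionD:
  assumes "proj_resolution M R d e"
  shows "fg_projective (R k)" "e \<in> lhom (R 0) M" "e ` lcarrier (R 0) = lcarrier M"
    "d k \<in> lhom (R (Suc k)) (R k)" "{x \<in> lcarrier (R 0). e x = lzero M} = d 0 ` lcarrier (R 1)"
  using assms unfolding proj_resolution_def by auto

lemma proj_resolution_exact:
  assumes R: "proj_resolution M R d e" and k: "k \<ge> 1"
  shows "{x \<in> lcarrier (R k). d (k - 1) x = lzero (R (k - 1))} = d k ` lcarrier (R (Suc k))"
proof -
  have "\<forall>j. {x \<in> lcarrier (R (Suc j)). d j x = lzero (R j)} = d (Suc j) ` lcarrier (R (Suc (Suc j)))"
    using R unfolding proj_resolution_def by (elim conjE) assumption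
  from this[rule_format, of "k - 1"] show ?thesis using k by simp
qed

lemma proj_resolution_lhom_pred: "proj_resolution M R d e \<Longrightarrow> k \<ge> 1 \<Longrightarrow> d (k - 1) \<in> lhom (R k) (R (k - 1))"
  using proj_resolutionD(4)[of M R d e "k - 1"] by simp

definition chain_kernel :: "('a::ring_1, 'm) lmod \<Rightarrow> (nat \<Rightarrow> ('a, nat \<Rightarrow> 'a) lmod) \<Rightarrow> ((nat \<Rightarrow> 'a) \<Rightarrow> 'm)
   \<Rightarrow> (nat \<Rightarrow> (nat \<Rightarrow> 'a) \<Rightarrow> (nat \<Rightarrow> 'a)) \<Rightarrow> nat \<Rightarrow> ('a, nat \<Rightarrow> 'a) lmod" where
  "chain_kernel M Pc p1 pc k = (if k = 1 then lkernel (Pc 1) M p1 else lkernel (Pc k) (Pc (k - 1)) (pc k))"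

lemma chain_kernel_simps[simp]:
  "ladd (chain_kernel M Pc p1 pc k) = ladd (Pc k)" "lzero (chain_kernel M Pc p1 pc k) = lzero (Pc k)"
  "lsmult (chain_kernel M Pc p1 pc k) = lsmult (Pc k)" "lsub (chain_kernel M Pc p1 pc k) = lsub (Pc k)"
  unfolding chain_kernel_def by auto

lemma chain_kernel_carrier_1:
  "lcarrier (chain_kernel M Pc p1 pc (Suc 0)) = {x \<in> lcarrier (Pc 1). p1 x = lzero M}"
  unfolding chain_kernel_def by simp

lemma chain_kernel_carrier:
  "k \<noteq> 1 \<Longrightarrow> lcarrier (chain_kernel M Pc p1 pc k) = {x \<in> lcarrier (Pc k). pc k x = lzero (Pc (k - 1))}"
  unfolding chain_kernel_def by simp

lemma chain_kernel_pred:
  "k \<ge> 2 \<Longrightarrow> chain_kernel M Pc p1 pc k = lkernel (Pc k) (chain_kernel M Pc p1 pc (k - 1)) (pc k)"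
  unfolding chain_kernel_def by (auto intro: lkernel_cong)

lemma chain_kernel_restrict:
  "chain_kernel M Pc p1 pc k = (Pc k)\<lparr>lcarrier := lcarrier (chain_kernel M Pc p1 pc k)\<rparr>"
  unfolding chain_kernel_def lkernel_def by simp

lemma chain_kernel_subset: "lcarrier (chain_kernel M Pc p1 pc k) \<subseteq> lcarrier (Pc k)"
  unfolding chain_kernel_def by auto

lemma lhom_chain_kernel_iff: "f \<in> lhom X (chain_kernel M Pc p1 pc k) \<longleftrightarrow>
   f \<in> lhom X (Pc k) \<and> (\<forall>x\<in>lcarrier X. f x \<in> lcarrier (chain_kernel M Pc p1 pc k))"
  by (subst chain_kernel_restrict) (simp add: lhom_restrict_target_iff chain_kernel_subset)

text \<open>A chain \<open>P\<^sub>N \<rightarrow> \<dots> \<rightarrow> P\<^sub>1 \<rightarrow> M\<close> of f.g. projectives in which every map is onto the kernel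
  \<open>C (k - 1)\<close> of the previous one; \<open>C k\<close> is then the syzygy \<open>\<Omega>\<^sup>kM\<close>.\<close>

locale syzygy_chain =
  fixes M :: "('a::ring_1, 'm) lmod" and N :: nat and Pc :: "nat \<Rightarrow> ('a, nat \<Rightarrow> 'a) lmod"
    and p1 :: "(nat \<Rightarrow> 'a) \<Rightarrow> 'm" and pc :: "nat \<Rightarrow> (nat \<Rightarrow> 'a) \<Rightarrow> (nat \<Rightarrow> 'a)"
  assumes M: "lmodule M" and N1: "N \<ge> 1"
    and proj: "\<And>k. 1 \<le> k \<Longrightarrow> k \<le> N \<Longrightarrow> fg_projective (Pc k)"
    and p1h: "p1 \<in> lhom (Pc 1) M" and p1o: "p1 ` lcarrier (Pc 1) = lcarrier M"
    and pch: "\<And>k. 2 \<le> k \<Longrightarrow> k \<le> N \<Longrightarrow> pc k \<in> lhom (Pc k) (chain_kernel M Pc p1 pc (k - 1))"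
    and pco: "\<And>k. 2 \<le> k \<Longrightarrow> k \<le> N \<Longrightarrow> pc k ` lcarrier (Pc k) = lcarrier (chain_kernel M Pc p1 pc (k - 1))"
begin

abbreviation "C \<equiv> chain_kernel M Pc p1 pc"

lemma Pc_lmodule: "1 \<le> k \<Longrightarrow> k \<le> N \<Longrightarrow> lmodule (Pc k)"
  using proj fg_projectiveD(1) by blast

lemma C_lmodule: "1 \<le> k \<Longrightarrow> k \<le> N \<Longrightarrow> lmodule (C k)"
proof (induction k rule: nat_induct_at_least)
  case base
  show ?case using lkernel_lmodule[OF Pc_lmodule M p1h] base unfolding chain_kernel_def by simp
next
  case (Suc k)
  have "pc (Suc k) \<in> lhom (Pc (Suc k)) (C k)" using pch[of "Suc k"] Suc by simp
  hence "lmodule (lkernel (Pc (Suc k)) (C k) (pc (Suc k)))"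
    using lkernel_lmodule[OF Pc_lmodule Suc.IH] Suc by simp
  thus ?case using chain_kernel_pred[of "Suc k" M Pc p1 pc] Suc by simp
qed

lemma C_submodule: "1 \<le> k \<Longrightarrow> k \<le> N \<Longrightarrow> submodule (lcarrier (C k)) (Pc k)"
  using C_lmodule chain_kernel_restrict chain_kernel_subset lmodule_restrict_submodule by metis

lemma syzygy_comparison_resolution:
  assumes R: "proj_resolution M R d e" and "1 \<le> k" "k \<le> N"
  shows "syzygy_comparison (Pc k) (lcarrier (C k)) (R (k - 1)) (d (k - 1) ` lcarrier (R k))"
  using assms(2,3)
proof (induction k rule: nat_induct_at_least)
  case base
  have "syzygy_comparison (Pc 1) {x \<in> lcarrier (Pc 1). p1 x = lzero M} (R 0) {y \<in> lcarrier (R 0). e y = lzero M}"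
    using syzygy_comparison_base[OF proj proj_resolutionD(1)[OF R] M p1h p1o proj_resolutionD(2,3)[OF R]] N1
    by simp
  thus ?case using proj_resolutionD(5)[OF R] by (simp add: chain_kernel_carrier_1)
next
  case (Suc k)
  have k: "1 \<le> k" "k \<le> N" "2 \<le> Suc k" "Suc k \<le> N" using Suc by auto
  have "pc (Suc k) \<in> lhom (Pc (Suc k)) ((Pc k)\<lparr>lcarrier := lcarrier (C k)\<rparr>)"
    using pch[OF k(3,4)] by (subst (asm) chain_kernel_restrict) simp
  moreover have "pc (Suc k) ` lcarrier (Pc (Suc k)) = lcarrier (C k)" using pco[OF k(3,4)] by simp
  ultimately have "syzygy_comparison (Pc (Suc k)) {y \<in> lcarrier (Pc (Suc k)). pc (Suc k) y = lzero (Pc k)}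
      (R k) {x \<in> lcarrier (R k). d (k - 1) x = lzero (R (k - 1))}"
    using Suc.IH k fg_projectiveD(1)[OF proj_resolutionD(1)[OF R]]
    by (intro syzygy_comparison_step[OF proj[OF k(1,2)] proj[OF _ k(4)] proj_resolutionD(1)[OF R] _
          C_submodule[OF k(1,2)] _ _ proj_resolution_lhom_pred[OF R k(1)]]) auto
  thus ?case using proj_resolution_exact[OF R k(1)] chain_kernel_carrier[of "Suc k" M Pc p1 pc] k(1) by simp
qed

lemma duals_extend_syzygy:
  assumes k: "1 \<le> k" "k \<le> N" and ev: "ext_vanishes M k"
  shows "duals_extend (C k) (Pc k)"
proof -
  obtain R d e where R: "proj_resolution M R d e" and cocycle:
    "\<forall>f\<in>lhom (R k) regmod. (\<forall>x\<in>lcarrier (R (Suc k)). f (d k x) = 0) \<longrightarrow>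
       (\<exists>g\<in>lhom (R (k - 1)) regmod. \<forall>x\<in>lcarrier (R k). f x = g (d (k - 1) x))"
    using ev unfolding ext_vanishes_def by blast
  have "\<forall>x\<in>lcarrier (R (Suc k)). d (k - 1) (d k x) = lzero (R (k - 1))"
    using proj_resolution_exact[OF R k(1)] by blast
  hence "duals_extend ((Pc k)\<lparr>lcarrier := lcarrier (C k)\<rparr>) (Pc k)"
    using fg_projectiveD(1)[OF proj_resolutionD(1)[OF R]]
    by (intro syzygy_comparison_duals_extend[OF Pc_lmodule[OF k] C_submodule[OF k] _
          proj_resolution_lhom_pred[OF R k(1)] _ syzygy_comparison_resolution[OF R k] cocycle])
  thus ?thesis using chain_kernel_restrict by metis
qed

end

section \<open>Replacing a syzygy by a stably isomorphic module\<close>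

lemma dsum_restrict:
  "dsum (P\<lparr>lcarrier := A\<rparr>) Q = (dsum P Q)\<lparr>lcarrier := {z. dfst z \<in> A \<and> dsnd z \<in> lcarrier Q}\<rparr>"
  unfolding dsum_def by simp

lemma stably_iso_retract_dsum:
  fixes X Q :: "('a::ring_1, nat \<Rightarrow> 'a) lmod" and M :: "('a, 'm) lmod"
  assumes M: "lmodule M" and Q: "lmodule Q"
    and f: "f \<in> lhom X M" and g: "g \<in> lhom M X" and u: "u \<in> lhom M Q" and v: "v \<in> lhom Q M"
    and uv: "\<forall>y\<in>lcarrier M. lsub M (f (g y)) y = v (u y)"
  defines "\<sigma> \<equiv> \<lambda>m. enc (g m) (lsmult Q (-1) (u m))" and "\<tau> \<equiv> \<lambda>z. ladd M (f (dfst z)) (v (dsnd z))"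
  shows "\<sigma> \<in> lhom M (dsum X Q)" and "\<tau> \<in> lhom (dsum X Q) M" and "\<And>m. m \<in> lcarrier M \<Longrightarrow> \<tau> (\<sigma> m) = m"
proof -
  show "\<sigma> \<in> lhom M (dsum X Q)" unfolding \<sigma>_def by (rule enc_hom[OF g lhom_neg[OF Q u]])
  show "\<tau> \<in> lhom (dsum X Q) M" unfolding \<tau>_def
    by (rule lhom_ladd[OF M lhom_comp[OF dfst_hom f] lhom_comp[OF dsnd_hom v]])
  fix m assume m: "m \<in> lcarrier M"
  have fgm: "f (g m) \<in> lcarrier M" using lhom_closed[OF f lhom_closed[OF g m]] .
  have "\<tau> (\<sigma> m) = ladd M (f (g m)) (lsmult M (-1) (v (u m)))"
    unfolding \<tau>_def \<sigma>_def using lhom_smult[OF v lhom_closed[OF u m]] by simp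
  also have "\<dots> = lsub M (f (g m)) (lsub M (f (g m)) m)" using uv m unfolding lsub_def by simp
  finally show "\<tau> (\<sigma> m) = m" using lsub_lsub[OF M fgm m] by simp
qed

lemma fg_projective_idempotent_kernel:
  assumes D: "fg_projective D" and E: "E \<in> lhom D D" and EE: "\<And>z. z \<in> lcarrier D \<Longrightarrow> E (E z) = E z"
  shows "fg_projective (D\<lparr>lcarrier := {z \<in> lcarrier D. E z = lzero D}\<rparr>)"
    and "\<And>z. z \<in> lcarrier D \<Longrightarrow> E (lsub D z (E z)) = lzero D"
proof -
  have DM: "lmodule D" using fg_projectiveD(1)[OF D] .
  show rK: "E (lsub D z (E z)) = lzero D" if z: "z \<in> lcarrier D" for z
    using lhom_sub[OF E z lhom_closed[OF E z] DM] EE[OF z] lsub_self[OF DM lhom_closed[OF E z]] by simp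
  define r where "r = (\<lambda>z. lsub D z (E z))"
  have rD: "r \<in> lhom D D" unfolding r_def by (rule lhom_lsub[OF DM lhom_id E])
  hence "r \<in> lhom D (D\<lparr>lcarrier := {z \<in> lcarrier D. E z = lzero D}\<rparr>)"
    using rK lhom_closed[OF rD] unfolding r_def by (subst lhom_restrict_target_iff) auto
  moreover have "\<forall>z\<in>{z \<in> lcarrier D. E z = lzero D}. r z = z"
    unfolding r_def using lsub_zero[OF DM] by auto
  ultimately show "fg_projective (D\<lparr>lcarrier := {z \<in> lcarrier D. E z = lzero D}\<rparr>)"
    by (rule fg_projective_retract[OF D kernel_submodule[OF DM DM E]])
qed

text \<open>If \<open>M\<close> is a retract of a submodule \<open>Y\<close> of \<open>D\<close> and the endomorphism \<open>\<kappa>\<close> of \<open>D\<close> agrees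
  with the identity on \<open>Y\<close> up to \<open>\<sigma> M\<close>, then \<open>complement_projection\<close> is an idempotent of \<open>D\<close>
  with image in \<open>Y\<close> that restricts to \<open>1 - \<sigma>\<tau>\<close> on \<open>Y\<close>.\<close>

definition complement_projection where
  "complement_projection D \<sigma> \<tau> \<kappa> z = lsub D (\<kappa> z) (\<sigma> (\<tau> (\<kappa> z)))"

context
  fixes D :: "('a::ring_1, nat \<Rightarrow> 'a) lmod" and M :: "('a, 'm) lmod" and Y \<sigma> \<tau> \<kappa>
  assumes D: "fg_projective D" and M: "lmodule M" and Y: "submodule Y D"
    and \<sigma>: "\<sigma> \<in> lhom M (D\<lparr>lcarrier := Y\<rparr>)" and \<tau>: "\<tau> \<in> lhom (D\<lparr>lcarrier := Y\<rparr>) M"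
    and \<tau>\<sigma>: "\<And>m. m \<in> lcarrier M \<Longrightarrow> \<tau> (\<sigma> m) = m"
    and \<kappa>: "\<kappa> \<in> lhom D (D\<lparr>lcarrier := Y\<rparr>)" and \<kappa>Y: "\<And>z. z \<in> Y \<Longrightarrow> \<exists>m\<in>lcarrier M. \<kappa> z = lsub D z (\<sigma> m)"
begin

private lemma DM: "lmodule D" and YM: "lmodule (D\<lparr>lcarrier := Y\<rparr>)" and Ysub: "Y \<subseteq> lcarrier D"
  using fg_projectiveD(1)[OF D] submodule_lmodule[OF _ Y] submoduleD(1)[OF Y] by auto

private lemma \<sigma>D: "\<sigma> \<in> lhom M D" and \<sigma>Y: "\<And>m. m \<in> lcarrier M \<Longrightarrow> \<sigma> m \<in> Y"
  using \<sigma> Ysub by (auto simp: lhom_restrict_target_iff)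

private lemma \<kappa>D: "\<kappa> \<in> lhom D D" and \<kappa>in: "\<And>z. z \<in> lcarrier D \<Longrightarrow> \<kappa> z \<in> Y"
  using \<kappa> Ysub by (auto simp: lhom_restrict_target_iff)

lemma complement_projection_lhom: "complement_projection D \<sigma> \<tau> \<kappa> \<in> lhom D D"
  unfolding complement_projection_def[abs_def]
  by (rule lhom_lsub[OF DM \<kappa>D lhom_comp[OF lhom_comp[OF \<kappa> \<tau>] \<sigma>D]])

lemma complement_projection_in: "z \<in> lcarrier D \<Longrightarrow> complement_projection D \<sigma> \<tau> \<kappa> z \<in> Y"
  unfolding complement_projection_def
  using lsub_closed[OF YM, of "\<kappa> z" "\<sigma> (\<tau> (\<kappa> z))"] \<kappa>in \<sigma>Y lhom_closed[OF \<tau>] by simp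

lemma complement_projection_on:
  assumes z: "z \<in> Y"
  shows "complement_projection D \<sigma> \<tau> \<kappa> z = lsub D z (\<sigma> (\<tau> z))"
proof -
  obtain m where m: "m \<in> lcarrier M" and \<kappa>z: "\<kappa> z = lsub D z (\<sigma> m)" using \<kappa>Y[OF z] by blast
  have \<tau>z: "\<tau> z \<in> lcarrier M" using lhom_closed[OF \<tau>] z by simp
  have "\<tau> (\<kappa> z) = lsub M (\<tau> z) m" using \<kappa>z lhom_sub[OF \<tau> _ _ YM, of z "\<sigma> m"] z \<sigma>Y[OF m] \<tau>\<sigma>[OF m] by simp
  hence "\<sigma> (\<tau> (\<kappa> z)) = lsub D (\<sigma> (\<tau> z)) (\<sigma> m)" using lhom_sub[OF \<sigma>D \<tau>z m M] by simp
  thus ?thesis unfolding complement_projection_def \<kappa>z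
    using lsub_lsub_cancel[OF DM _ _ lhom_closed[OF \<sigma>D \<tau>z]] z Ysub lhom_closed[OF \<sigma>D m] by auto
qed

lemma complement_projection_idem:
  assumes z: "z \<in> lcarrier D"
  shows "complement_projection D \<sigma> \<tau> \<kappa> (complement_projection D \<sigma> \<tau> \<kappa> z) = complement_projection D \<sigma> \<tau> \<kappa> z"
proof -
  let ?E = "complement_projection D \<sigma> \<tau> \<kappa>"
  have k: "\<kappa> z \<in> Y" and sk: "\<sigma> (\<tau> (\<kappa> z)) \<in> Y" and tk: "\<tau> (\<kappa> z) \<in> lcarrier M"
    using \<kappa>in[OF z] \<sigma>Y lhom_closed[OF \<tau>] by auto
  have "\<tau> (?E z) = lzero M" unfolding complement_projection_def
    using lhom_sub[OF \<tau> _ _ YM, of "\<kappa> z" "\<sigma> (\<tau> (\<kappa> z))"] k sk \<tau>\<sigma>[OF tk] lsub_self[OF M tk] by simp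
  thus ?thesis using complement_projection_on[OF complement_projection_in[OF z]] lhom_zero[OF M DM \<sigma>D]
      lsub_zero[OF DM lhom_closed[OF complement_projection_lhom z]] by simp
qed

lemma retract_in_projective_summand:
  obtains K where "fg_projective (D\<lparr>lcarrier := K\<rparr>)" and "K \<subseteq> lcarrier D"
    and "\<sigma> ` lcarrier M = K \<inter> Y" and "\<And>z. z \<in> lcarrier D \<Longrightarrow> \<exists>y\<in>Y. lsub D z y \<in> K"
proof
  let ?E = "complement_projection D \<sigma> \<tau> \<kappa>"
  let ?K = "{z \<in> lcarrier D. ?E z = lzero D}"
  show "fg_projective (D\<lparr>lcarrier := ?K\<rparr>)"
    by (rule fg_projective_idempotent_kernel(1)[of D ?E, OF D complement_projection_lhom complement_projection_idem])
  show "?K \<subseteq> lcarrier D" by blast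
  show "\<exists>y\<in>Y. lsub D z y \<in> ?K" if "z \<in> lcarrier D" for z
    using that complement_projection_in lsub_closed[OF DM _ lhom_closed[OF complement_projection_lhom]]
      fg_projective_idempotent_kernel(2)[of D ?E, OF D complement_projection_lhom complement_projection_idem]
    by blast
  have "?E (\<sigma> m) = lzero D" if "m \<in> lcarrier M" for m
    using complement_projection_on[OF \<sigma>Y[OF that]] \<tau>\<sigma>[OF that] lsub_self[OF DM lhom_closed[OF \<sigma>D that]] by simp
  moreover have "z \<in> \<sigma> ` lcarrier M" if "z \<in> ?K \<inter> Y" for z
  proof -
    have "lsub D z (\<sigma> (\<tau> z)) = lzero D" using that complement_projection_on by auto
    hence "z = \<sigma> (\<tau> z)" using lsub_eq_zero[OF DM _ lhom_closed[OF \<sigma>D]] that lhom_closed[OF \<tau>] by auto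
    thus ?thesis using that lhom_closed[OF \<tau>] by auto
  qed
  ultimately show "\<sigma> ` lcarrier M = ?K \<inter> Y" using \<sigma>Y lhom_closed[OF \<sigma>D] by blast
qed

end

text \<open>Extending the homotopy \<open>u'\<close> from \<open>X\<close> to \<open>P\<close> gives a map \<open>P \<oplus> Q \<rightarrow> X \<oplus> Q\<close> that agrees with
  the identity of \<open>X \<oplus> Q\<close> up to the section \<open>m \<mapsto> (g m, -u m)\<close> of \<open>M\<close>.\<close>

lemma duals_extend_stable_correction:
  fixes X P Q Q' :: "('a::ring_1, nat \<Rightarrow> 'a) lmod" and M :: "('a, 'm) lmod"
  assumes X: "lmodule X" and P: "lmodule P" and Q: "fg_projective Q" and Q': "fg_projective Q'"
    and ext: "duals_extend X P" and f: "f \<in> lhom X M" and g: "g \<in> lhom M X" and u: "u \<in> lhom M Q"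
    and u': "u' \<in> lhom X Q'" and v': "v' \<in> lhom Q' X" and uv': "\<forall>x\<in>lcarrier X. lsub X (g (f x)) x = v' (u' x)"
  obtains \<kappa> where "\<kappa> \<in> lhom (dsum P Q) (dsum X Q)"
    and "\<And>z. z \<in> lcarrier (dsum X Q) \<Longrightarrow>
      \<kappa> z = lsub (dsum X Q) z (enc (g (f (dfst z))) (lsmult Q (-1) (u (f (dfst z)))))"
proof -
  have QM: "lmodule Q" using fg_projectiveD(1)[OF Q] .
  obtain w' where w': "w' \<in> lhom P Q'" and w'e: "\<forall>x\<in>lcarrier X. w' x = u' x"
    using duals_extend_lhom_projective[OF X P Q' ext u'] by blast
  obtain w'' where w'': "w'' \<in> lhom P Q" and w''e: "\<forall>x\<in>lcarrier X. w'' x = u (f x)"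
    using duals_extend_lhom_projective[OF X P Q ext lhom_comp[OF f u]] by blast
  define \<kappa> where "\<kappa> = (\<lambda>z. enc (lsmult X (-1) (v' (w' (dfst z)))) (ladd Q (dsnd z) (w'' (dfst z))))"
  have "\<kappa> \<in> lhom (dsum P Q) (dsum X Q)" unfolding \<kappa>_def
    by (rule enc_hom[OF lhom_neg[OF X lhom_comp[OF lhom_comp[OF dfst_hom w'] v']]
          lhom_ladd[OF QM dsnd_hom lhom_comp[OF dfst_hom w'']]])
  moreover have "\<kappa> z = lsub (dsum X Q) z (enc (g (f (dfst z))) (lsmult Q (-1) (u (f (dfst z)))))"
    if "z \<in> lcarrier (dsum X Q)" for z
  proof -
    have x: "dfst z \<in> lcarrier X" and y: "dsnd z \<in> lcarrier Q" using that by (auto simp: dsum_carrier)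
    have fx: "f (dfst z) \<in> lcarrier M" using lhom_closed[OF f x] .
    have "lsmult X (-1) (v' (w' (dfst z))) = lsub X (dfst z) (g (f (dfst z)))"
      using uv' x w'e lsub_swap[OF X lhom_closed[OF g fx] x]
        lsmult_minus_minus[OF X lsub_closed[OF X x lhom_closed[OF g fx]]] by simp
    moreover have "ladd Q (dsnd z) (w'' (dfst z)) = lsub Q (dsnd z) (lsmult Q (-1) (u (f (dfst z))))"
      using lsub_neg[OF QM y lhom_closed[OF u fx]] w''e x by simp
    ultimately show ?thesis unfolding \<kappa>_def by (simp add: dsum_lsub)
  qed
  ultimately show ?thesis by (rule that)
qed

lemma lhom_image_restrict_complement:
  assumes D: "lmodule D" and W: "lmodule W" and q: "q \<in> lhom D W" and KD: "K \<subseteq> lcarrier D"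
    and KY: "\<And>z. z \<in> lcarrier D \<Longrightarrow> \<exists>y\<in>lcarrier D. q y = lzero W \<and> lsub D z y \<in> K"
  shows "q ` K = q ` lcarrier D"
proof
  show "q ` K \<subseteq> q ` lcarrier D" using KD by blast
  show "q ` lcarrier D \<subseteq> q ` K"
  proof
    fix w assume "w \<in> q ` lcarrier D"
    then obtain z where z: "z \<in> lcarrier D" "w = q z" by blast
    then obtain y where y: "y \<in> lcarrier D" "q y = lzero W" "lsub D z y \<in> K" using KY by blast
    have "q (lsub D z y) = w"
      using lhom_sub[OF q z(1) y(1) D] y(2) z(2) lsub_zero[OF W lhom_closed[OF q z(1)]] by simp
    thus "w \<in> q ` K" using y(3) by (metis imageI)
  qed
qed

text \<open>As \<open>\<Omega>W = ker p\<close> is stably isomorphic to \<open>M\<close>, \<open>M\<close> is a retract of \<open>\<Omega>W \<oplus> Q\<close>. Since maps out of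
  \<open>\<Omega>W\<close> extend to \<open>P\<close>, the complementary idempotent of \<open>\<Omega>W \<oplus> Q\<close> extends to \<open>P \<oplus> Q\<close>, and its
  kernel is a projective module mapping onto \<open>W\<close> with kernel exactly \<open>M\<close>.\<close>

lemma stably_iso_syzygy_replacement:
  fixes P :: "('a::ring_1, nat \<Rightarrow> 'a) lmod" and W :: "('a, 'w) lmod" and M :: "('a, 'm) lmod"
  assumes P: "fg_projective P" and W: "lmodule W" and M: "lmodule M"
    and p: "p \<in> lhom P W" and po: "p ` lcarrier P = lcarrier W"
    and ext: "duals_extend (lkernel P W p) P" and si: "stably_iso (lkernel P W p) M"
  obtains P'' q \<sigma> where "fg_projective P''" "q \<in> lhom P'' W" "q ` lcarrier P'' = lcarrier W"
    "\<sigma> \<in> lhom M P''" "inj_on \<sigma> (lcarrier M)" "\<sigma> ` lcarrier M = {z \<in> lcarrier P''. q z = lzero W}"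
proof -
  define X where "X = lkernel P W p"
  have PM: "lmodule P" using fg_projectiveD(1)[OF P] .
  have XM: "lmodule X" unfolding X_def by (rule lkernel_lmodule[OF PM W p])
  obtain f g where f: "f \<in> lhom X M" and g: "g \<in> lhom M X"
    and fp1: "factors_through_proj X X (\<lambda>x. lsub X (g (f x)) x)"
    and fp2: "factors_through_proj M M (\<lambda>y. lsub M (f (g y)) y)"
    using si unfolding stably_iso_def X_def by blast
  obtain Q' :: "('a, nat \<Rightarrow> 'a) lmod" and u' v' where Q': "fg_projective Q'" and u': "u' \<in> lhom X Q'"
    and v': "v' \<in> lhom Q' X" and uv': "\<forall>x\<in>lcarrier X. lsub X (g (f x)) x = v' (u' x)"
    using fp1 unfolding factors_through_proj_def by blast
  obtain Q :: "('a, nat \<Rightarrow> 'a) lmod" and u v where Q: "fg_projective Q" and u: "u \<in> lhom M Q"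
    and v: "v \<in> lhom Q M" and uv: "\<forall>y\<in>lcarrier M. lsub M (f (g y)) y = v (u y)"
    using fp2 unfolding factors_through_proj_def by blast
  have QM: "lmodule Q" using fg_projectiveD(1)[OF Q] .
  define D where "D = dsum P Q"
  define q where "q = (\<lambda>z. p (dfst z))"
  define Y where "Y = {z \<in> lcarrier D. q z = lzero W}"
  have XQ: "dsum X Q = D\<lparr>lcarrier := Y\<rparr>"
    unfolding X_def D_def Y_def q_def lkernel_def by (simp add: dsum_restrict dsum_carrier conj_ac)
  have DP: "fg_projective D" unfolding D_def by (rule fg_projective_dsum[OF P Q])
  have DM: "lmodule D" using fg_projectiveD(1)[OF DP] .
  have qD: "q \<in> lhom D W" unfolding q_def D_def by (rule lhom_comp[OF dfst_hom p])
  have Ysub: "submodule Y D" unfolding Y_def by (rule kernel_submodule[OF DM W qD])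
  obtain \<kappa> where \<kappa>0: "\<kappa> \<in> lhom (dsum P Q) (dsum X Q)" and \<kappa>0Y: "\<And>z. z \<in> lcarrier (dsum X Q) \<Longrightarrow>
      \<kappa> z = lsub (dsum X Q) z (enc (g (f (dfst z))) (lsmult Q (-1) (u (f (dfst z)))))"
    using duals_extend_stable_correction[OF XM PM Q Q' ext[folded X_def] f g u u' v' uv'] by blast
  have \<kappa>: "\<kappa> \<in> lhom D (D\<lparr>lcarrier := Y\<rparr>)" using \<kappa>0 unfolding XQ D_def .
  define \<sigma> where "\<sigma> = (\<lambda>m. enc (g m) (lsmult Q (-1) (u m)))"
  define \<tau> where "\<tau> = (\<lambda>z. ladd M (f (dfst z)) (v (dsnd z)))"
  have \<sigma>: "\<sigma> \<in> lhom M (D\<lparr>lcarrier := Y\<rparr>)" and \<tau>: "\<tau> \<in> lhom (D\<lparr>lcarrier := Y\<rparr>) M"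
    and \<tau>\<sigma>: "\<And>m. m \<in> lcarrier M \<Longrightarrow> \<tau> (\<sigma> m) = m"
    using stably_iso_retract_dsum[OF M QM f g u v uv] unfolding \<sigma>_def \<tau>_def XQ by auto
  have "\<exists>m\<in>lcarrier M. \<kappa> z = lsub D z (\<sigma> m)" if "z \<in> Y" for z
  proof -
    have z: "z \<in> lcarrier (dsum X Q)" using that unfolding XQ by simp
    hence "f (dfst z) \<in> lcarrier M" using lhom_closed[OF f] by (simp add: dsum_carrier)
    moreover have "\<kappa> z = lsub D z (\<sigma> (f (dfst z)))" using \<kappa>0Y[OF z] unfolding XQ \<sigma>_def by simp
    ultimately show ?thesis by blast
  qed
  then obtain K where KP: "fg_projective (D\<lparr>lcarrier := K\<rparr>)" and KD: "K \<subseteq> lcarrier D"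
    and \<sigma>K: "\<sigma> ` lcarrier M = K \<inter> Y" and KY: "\<And>z. z \<in> lcarrier D \<Longrightarrow> \<exists>y\<in>Y. lsub D z y \<in> K"
    using retract_in_projective_summand[OF DP M Ysub \<sigma> \<tau> \<tau>\<sigma> \<kappa>] by blast
  have "q ` lcarrier D = lcarrier W"
  proof
    show "q ` lcarrier D \<subseteq> lcarrier W" using lhom_closed[OF qD] by blast
    show "lcarrier W \<subseteq> q ` lcarrier D"
    proof
      fix w assume "w \<in> lcarrier W"
      then obtain x where "x \<in> lcarrier P" "w = p x" using po by (metis imageE)
      thus "w \<in> q ` lcarrier D"
        using QM by (intro image_eqI[of w q "enc x (lzero Q)"]) (simp_all add: q_def D_def dsum_carrier lzero_closed)
    qed
  qed
  moreover have "q ` K = q ` lcarrier D"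
    using lhom_image_restrict_complement[OF DM W qD KD] KY unfolding Y_def by blast
  moreover have "\<sigma> \<in> lhom M D" "\<And>m. m \<in> lcarrier M \<Longrightarrow> \<sigma> m \<in> K"
    using \<sigma> \<sigma>K submoduleD(1)[OF Ysub] by (auto simp: lhom_restrict_target_iff)
  moreover have "inj_on \<sigma> (lcarrier M)" by (rule inj_on_inverseI[of _ \<tau>]) (rule \<tau>\<sigma>)
  moreover have "\<sigma> ` lcarrier M = {z \<in> K. q z = lzero W}" using \<sigma>K KD unfolding Y_def by blast
  ultimately show ?thesis
    using that[of "D\<lparr>lcarrier := K\<rparr>" q \<sigma>] KP lhom_restrict[OF KD qD]
    by (simp add: lhom_restrict_target_iff[OF KD])
qed

section \<open>Closed chains of syzygies give periodic complexes\<close>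

text \<open>Degree \<open>i\<close> of the periodic complex carries \<open>P\<^sub>k\<close> with \<open>k = chain_level n i \<in> {1..n}\<close>; degree \<open>0\<close>
  carries \<open>P\<^sub>n\<close> and the level drops by one at each step to the right, wrapping from \<open>1\<close> to \<open>n\<close>.\<close>

definition chain_level :: "nat \<Rightarrow> int \<Rightarrow> nat" where
  "chain_level n i = n - nat (i mod int n)"

lemma chain_level_bounds: "n \<ge> 1 \<Longrightarrow> 1 \<le> chain_level n i \<and> chain_level n i \<le> n"
proof -
  assume n: "n \<ge> 1"
  have "0 \<le> i mod int n" "i mod int n < int n" using n by auto
  thus ?thesis unfolding chain_level_def by linarith
qed

lemma chain_level_succ:
  assumes n: "n \<ge> 1"
  shows "chain_level n (i + 1) = (if chain_level n i = 1 then n else chain_level n i - 1)"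
proof -
  define r where "r = i mod int n"
  have r: "0 \<le> r" "r < int n" unfolding r_def using n by auto
  have e: "(i + 1) mod int n = (r + 1) mod int n" unfolding r_def by (simp add: mod_add_left_eq)
  show ?thesis
  proof (cases "r + 1 = int n")
    case True
    hence "(i + 1) mod int n = 0" using e by simp
    moreover have "chain_level n i = 1" unfolding chain_level_def r_def[symmetric] using True r by linarith
    ultimately show ?thesis unfolding chain_level_def by simp
  next
    case False
    hence "(i + 1) mod int n = r + 1" using e r by simp
    moreover have "chain_level n i \<noteq> 1" unfolding chain_level_def r_def[symmetric] using False r by auto
    ultimately show ?thesis unfolding chain_level_def r_def[symmetric] using r False by auto
  qed
qed

lemma chain_level_periodic: "chain_level n (i + int n) = chain_level n i"
  unfolding chain_level_def by simp

lemma chain_level_0: "chain_level n 0 = n"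
  unfolding chain_level_def by simp

locale closed_syzygy_chain = syzygy_chain +
  fixes \<sigma>
  assumes \<sigma>: "\<sigma> \<in> lhom M (Pc N)" and \<sigma>_inj: "inj_on \<sigma> (lcarrier M)"
    and \<sigma>_image: "\<sigma> ` lcarrier M = lcarrier (C N)"
begin

definition periodic_module :: "int \<Rightarrow> ('a, nat \<Rightarrow> 'a) lmod" where
  "periodic_module i = Pc (chain_level N i)"

definition periodic_map :: "int \<Rightarrow> (nat \<Rightarrow> 'a) \<Rightarrow> nat \<Rightarrow> 'a" where
  "periodic_map i x = (if chain_level N i = 1 then \<sigma> (p1 x) else pc (chain_level N i) x)"

lemma level_bounds: "1 \<le> chain_level N i" "chain_level N i \<le> N"
  using chain_level_bounds[OF N1] by auto

lemma level_succ: "chain_level N (i + 1) = (if chain_level N i = 1 then N else chain_level N i - 1)"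
  by (rule chain_level_succ[OF N1])

lemma \<sigma>_zero_iff: "m \<in> lcarrier M \<Longrightarrow> \<sigma> m = lzero (Pc N) \<longleftrightarrow> m = lzero M"
  using \<sigma>_inj lhom_zero[OF M Pc_lmodule[OF N1 order.refl] \<sigma>] lzero_closed[OF M] unfolding inj_on_def by metis

lemma periodic_map_lhom: "periodic_map i \<in> lhom (periodic_module i) (C (chain_level N (i + 1)))"
proof (cases "chain_level N i = 1")
  case True
  have "\<sigma> \<in> lhom M (C N)" using \<sigma> \<sigma>_image by (auto simp: lhom_chain_kernel_iff)
  thus ?thesis using lhom_comp[OF p1h] True level_succ[of i]
    unfolding periodic_map_def[abs_def] periodic_module_def by simp
next
  case False
  thus ?thesis using pch[of "chain_level N i"] level_bounds[of i] level_succ[of i]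
    unfolding periodic_map_def[abs_def] periodic_module_def by simp
qed

lemma periodic_map_image:
  "periodic_map i ` lcarrier (periodic_module i) = lcarrier (C (chain_level N (i + 1)))"
proof (cases "chain_level N i = 1")
  case True
  have "periodic_map i ` lcarrier (periodic_module i) = \<sigma> ` (p1 ` lcarrier (Pc 1))"
    unfolding periodic_map_def periodic_module_def using True by (simp add: image_image)
  thus ?thesis using p1o \<sigma>_image True level_succ[of i] by simp
next
  case False
  thus ?thesis using pco[of "chain_level N i"] level_bounds[of i] level_succ[of i]
    unfolding periodic_map_def periodic_module_def by simp
qed

lemma periodic_map_kernel:
  "{x \<in> lcarrier (periodic_module i). periodic_map i x = lzero (periodic_module (i + 1))}
     = lcarrier (C (chain_level N i))"
proof (cases "chain_level N i = 1")
  case True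
  have "{x \<in> lcarrier (Pc 1). \<sigma> (p1 x) = lzero (Pc N)} = {x \<in> lcarrier (Pc 1). p1 x = lzero M}"
    using \<sigma>_zero_iff lhom_closed[OF p1h] by blast
  thus ?thesis unfolding periodic_map_def periodic_module_def
    using True level_succ[of i] by (simp add: chain_kernel_carrier_1)
next
  case False
  thus ?thesis unfolding periodic_map_def periodic_module_def
    using level_succ[of i] by (simp add: chain_kernel_carrier)
qed

text \<open>A functional vanishing on the image of the previous map factors through \<open>periodic_map i\<close>,
  whose image is a syzygy \<open>C k\<close>; it then extends to \<open>P\<^sub>k\<close> because \<open>Ext\<^sup>k(M, A) = 0\<close>.\<close>

lemma periodic_dual_exact:
  assumes ev: "\<forall>k. 1 \<le> k \<and> k \<le> N \<longrightarrow> ext_vanishes M k"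
    and f: "f \<in> lhom (periodic_module i) regmod"
    and f0: "\<forall>x\<in>lcarrier (periodic_module (i - 1)). f (periodic_map (i - 1) x) = 0"
  shows "\<exists>g\<in>lhom (periodic_module (i + 1)) regmod. \<forall>x\<in>lcarrier (periodic_module i). f x = g (periodic_map i x)"
proof -
  define k where "k = chain_level N (i + 1)"
  have k: "1 \<le> k" "k \<le> N" unfolding k_def using level_bounds by auto
  have "f x = lzero regmod" if x: "x \<in> lcarrier (periodic_module i)" and x0: "periodic_map i x = lzero (C k)" for x
  proof -
    have "x \<in> lcarrier (C (chain_level N i))"
      using periodic_map_kernel[of i] x x0 by (auto simp: k_def periodic_module_def)
    then obtain y where "y \<in> lcarrier (periodic_module (i - 1))" "x = periodic_map (i - 1) y"
      using periodic_map_image[of "i - 1"] by auto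
    thus ?thesis using f0 by simp
  qed
  then obtain f' where f': "f' \<in> lhom (C k) regmod"
    and f'e: "\<forall>x\<in>lcarrier (periodic_module i). f x = f' (periodic_map i x)"
    using lhom_factor_epi[OF _ C_lmodule[OF k] regmod_lmodule periodic_map_lhom[of i, folded k_def]
        periodic_map_image[of i, folded k_def] f] Pc_lmodule level_bounds
    unfolding periodic_module_def by blast
  obtain g where g: "g \<in> lhom (Pc k) regmod" and ge: "\<forall>x\<in>lcarrier (C k). g x = f' x"
    using duals_extend_syzygy[OF k] ev k f' unfolding duals_extend_def by blast
  show ?thesis
  proof (intro bexI[of _ g] ballI)
    show "g \<in> lhom (periodic_module (i + 1)) regmod" using g unfolding periodic_module_def k_def .
    fix x assume "x \<in> lcarrier (periodic_module i)"
    thus "f x = g (periodic_map i x)" using ge f'e lhom_closed[OF periodic_map_lhom[of i, folded k_def]] by simp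
  qed
qed

lemma periodic_n_strong:
  assumes ev: "\<forall>k. 1 \<le> k \<and> k \<le> N \<longrightarrow> ext_vanishes M k"
  shows "n_strong N periodic_module periodic_map"
  unfolding n_strong_def totally_acyclic_def
proof (intro conjI allI ballI impI)
  fix i
  show "fg_projective (periodic_module i)" unfolding periodic_module_def using proj level_bounds by blast
  show "periodic_map i \<in> lhom (periodic_module i) (periodic_module (i + 1))"
    using periodic_map_lhom[of i] lhom_chain_kernel_iff unfolding periodic_module_def by blast
  show "{x \<in> lcarrier (periodic_module (i + 1)). periodic_map (i + 1) x = lzero (periodic_module (i + 2))}
      = periodic_map i ` lcarrier (periodic_module i)"
    using periodic_map_kernel[of "i + 1"] periodic_map_image[of i] by (simp add: add.assoc)
  show "periodic_module (i + int N) = periodic_module i"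
    unfolding periodic_module_def by (simp add: chain_level_periodic)
  fix x show "periodic_map (i + int N) x = periodic_map i x"
    unfolding periodic_map_def by (simp add: chain_level_periodic)
next
  fix i f assume "f \<in> lhom (periodic_module i) regmod"
    "\<forall>x\<in>lcarrier (periodic_module (i - 1)). f (periodic_map (i - 1) x) = 0"
  thus "\<exists>g\<in>lhom (periodic_module (i + 1)) regmod. \<forall>x\<in>lcarrier (periodic_module i). f x = g (periodic_map i x)"
    by (rule periodic_dual_exact[OF ev])
qed

lemma closed_chain_n_strongly_GP:
  assumes ev: "\<forall>k. 1 \<le> k \<and> k \<le> N \<longrightarrow> ext_vanishes M k"
  shows "n_strongly_GP N M"
proof -
  have kernel: "lcarrier (lkernel (periodic_module 0) (periodic_module 1) (periodic_map 0)) = lcarrier (C N)"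
    using periodic_map_kernel[of 0] chain_level_0[of N] by simp
  have "\<sigma> \<in> lhom M (lkernel (periodic_module 0) (periodic_module 1) (periodic_map 0))"
    using \<sigma> \<sigma>_image kernel chain_level_0[of N] unfolding lhom_def periodic_module_def by auto
  moreover have "bij_betw \<sigma> (lcarrier M) (lcarrier (lkernel (periodic_module 0) (periodic_module 1) (periodic_map 0)))"
    unfolding bij_betw_def kernel using \<sigma>_inj \<sigma>_image by blast
  ultimately show ?thesis
    unfolding n_strongly_GP_def lmod_iso_def using periodic_n_strong[OF ev] by blast
qed

end

section \<open>Closing a chain of syzygies\<close>

lemma syzygy_chain_from_syzygies:
  fixes M :: "('a::ring_1, 'm) lmod" and Om :: "nat \<Rightarrow> ('a, nat \<Rightarrow> 'a) lmod"
  assumes M: "lmodule M" and n: "n \<ge> 1" and s1: "is_syzygy M (Om 1)"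
    and sk: "\<forall>k. 1 \<le> k \<and> k < n \<longrightarrow> is_syzygy (Om k) (Om (Suc k))"
  obtains Pc p1 pc where "syzygy_chain M n Pc p1 pc" and "Om n = chain_kernel M Pc p1 pc n"
proof -
  obtain P1 p1 where P1: "fg_projective P1" and p1h: "p1 \<in> lhom P1 M" and p1o: "p1 ` lcarrier P1 = lcarrier M"
    and Om1: "Om 1 = lkernel P1 M p1"
    using s1 unfolding is_syzygy_def by blast
  have "\<forall>k. \<exists>P p. 1 \<le> k \<and> k < n \<longrightarrow> fg_projective P \<and> p \<in> lhom P (Om k) \<and>
      p ` lcarrier P = lcarrier (Om k) \<and> Om (Suc k) = lkernel P (Om k) p"
    using sk unfolding is_syzygy_def by blast
  then obtain F f where F: "\<And>k. 1 \<le> k \<Longrightarrow> k < n \<Longrightarrow> fg_projective (F k) \<and> f k \<in> lhom (F k) (Om k) \<and>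
      f k ` lcarrier (F k) = lcarrier (Om k) \<and> Om (Suc k) = lkernel (F k) (Om k) (f k)"
    by metis
  define Pc where "Pc = (\<lambda>k. if k = 1 then P1 else F (k - 1))"
  define pc where "pc = (\<lambda>k. f (k - 1))"
  have Om: "Om k = chain_kernel M Pc p1 pc k" if "1 \<le> k" "k \<le> n" for k
    using that
  proof (induction k rule: nat_induct_at_least)
    case base thus ?case using Om1 unfolding chain_kernel_def Pc_def by simp
  next
    case (Suc k)
    have "Om (Suc k) = lkernel (Pc (Suc k)) (chain_kernel M Pc p1 pc (Suc k - 1)) (pc (Suc k))"
      using F[of k] Suc unfolding Pc_def pc_def by simp
    thus ?case using chain_kernel_pred[of "Suc k" M Pc p1 pc] Suc by simp
  qed
  have "syzygy_chain M n Pc p1 pc"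
  proof
    show "lmodule M" "1 \<le> n" "p1 \<in> lhom (Pc 1) M" "p1 ` lcarrier (Pc 1) = lcarrier M"
      using M n p1h p1o unfolding Pc_def by simp_all
    show "fg_projective (Pc k)" if "1 \<le> k" "k \<le> n" for k
      unfolding Pc_def using P1 F that by (auto simp: le_diff_conv2)
    fix k assume k: "2 \<le> k" "k \<le> n"
    have "Pc k = F (k - 1)" "pc k = f (k - 1)" unfolding Pc_def pc_def using k by auto
    thus "pc k \<in> lhom (Pc k) (chain_kernel M Pc p1 pc (k - 1))"
      and "pc k ` lcarrier (Pc k) = lcarrier (chain_kernel M Pc p1 pc (k - 1))"
      using F[of "k - 1"] Om[of "k - 1"] k by simp_all
  qed
  thus ?thesis using that Om n by blast
qed

context syzygy_chain
begin

lemma closed_chain_exists_1: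
  assumes N: "N = 1" and ext: "duals_extend (C N) (Pc N)" and si: "stably_iso (C N) M"
  obtains Pc' p1' pc' \<sigma> where "closed_syzygy_chain M N Pc' p1' pc' \<sigma>"
proof -
  have C1: "C N = lkernel (Pc 1) M p1" unfolding chain_kernel_def N by simp
  have ext1: "duals_extend (lkernel (Pc 1) M p1) (Pc 1)" using ext C1 N by simp
  have si1: "stably_iso (lkernel (Pc 1) M p1) M" using si C1 by simp
  obtain P'' q \<sigma> where P'': "fg_projective P''" and q: "q \<in> lhom P'' M" "q ` lcarrier P'' = lcarrier M"
    and \<sigma>: "\<sigma> \<in> lhom M P''" "inj_on \<sigma> (lcarrier M)" "\<sigma> ` lcarrier M = {z \<in> lcarrier P''. q z = lzero M}"
    using stably_iso_syzygy_replacement[OF proj[OF order.refl N1] M M p1h p1o ext1 si1] by blast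
  have "syzygy_chain M N (Pc(1 := P'')) q pc"
    by unfold_locales (use M N P'' q in simp_all)
  moreover have "closed_syzygy_chain_axioms M N (Pc(1 := P'')) q pc \<sigma>"
    by unfold_locales (use \<sigma> N in \<open>simp_all add: chain_kernel_def\<close>)
  ultimately show ?thesis by (intro that closed_syzygy_chain.intro)
qed

lemma closed_chain_exists_ge2:
  assumes N: "N \<ge> 2" and ext: "duals_extend (C N) (Pc N)" and si: "stably_iso (C N) M"
  obtains Pc' p1' pc' \<sigma> where "closed_syzygy_chain M N Pc' p1' pc' \<sigma>"
proof -
  have CN: "C N = lkernel (Pc N) (C (N - 1)) (pc N)" using chain_kernel_pred[OF N] .
  have extN: "duals_extend (lkernel (Pc N) (C (N - 1)) (pc N)) (Pc N)" using ext CN by simp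
  have siN: "stably_iso (lkernel (Pc N) (C (N - 1)) (pc N)) M" using si CN by simp
  have CM: "lmodule (C (N - 1))" using C_lmodule N by simp
  obtain P'' q \<sigma> where P'': "fg_projective P''" and q: "q \<in> lhom P'' (C (N - 1))"
    "q ` lcarrier P'' = lcarrier (C (N - 1))"
    and \<sigma>: "\<sigma> \<in> lhom M P''" "inj_on \<sigma> (lcarrier M)" "\<sigma> ` lcarrier M = {z \<in> lcarrier P''. q z = lzero (C (N - 1))}"
    using stably_iso_syzygy_replacement[OF proj[OF N1 order.refl] CM M pch[OF N order.refl]
        pco[OF N order.refl] extN siN] by blast
  define Pc' where "Pc' = Pc(N := P'')"
  define pc' where "pc' = pc(N := q)"
  have lower: "chain_kernel M Pc' p1 pc' k = C k" if "k < N" for k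
    using that N unfolding chain_kernel_def Pc'_def pc'_def by auto
  have ch': "syzygy_chain M N Pc' p1 pc'"
  proof
    show "lmodule M" "1 \<le> N" "p1 \<in> lhom (Pc' 1) M" "p1 ` lcarrier (Pc' 1) = lcarrier M"
      using M N1 p1h p1o N unfolding Pc'_def by simp_all
    show "fg_projective (Pc' k)" if "1 \<le> k" "k \<le> N" for k
      using proj[OF that] P'' unfolding Pc'_def by simp
    fix k assume k: "2 \<le> k" "k \<le> N"
    have "chain_kernel M Pc' p1 pc' (k - 1) = C (k - 1)" using lower k by simp
    moreover have "Pc' k = (if k = N then P'' else Pc k)" "pc' k = (if k = N then q else pc k)"
      unfolding Pc'_def pc'_def by simp_all
    ultimately show "pc' k \<in> lhom (Pc' k) (chain_kernel M Pc' p1 pc' (k - 1))"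
      and "pc' k ` lcarrier (Pc' k) = lcarrier (chain_kernel M Pc' p1 pc' (k - 1))"
      using q pch[OF k] pco[OF k] by simp_all
  qed
  have "lcarrier (chain_kernel M Pc' p1 pc' N) = {z \<in> lcarrier P''. q z = lzero (C (N - 1))}"
  proof -
    have "N - 1 \<noteq> N" "N \<noteq> 1" using N by auto
    thus ?thesis using chain_kernel_carrier[of N M Pc' p1 pc'] unfolding Pc'_def pc'_def by simp
  qed
  hence "closed_syzygy_chain_axioms M N Pc' p1 pc' \<sigma>"
    unfolding closed_syzygy_chain_axioms_def using \<sigma> by (simp add: Pc'_def)
  with ch' show ?thesis by (intro that closed_syzygy_chain.intro)
qed

end

lemma syzygy_ext_imp_n_strongly_GP:
  fixes M :: "('a::ring_1, 'm) lmod"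
  assumes M: "lmodule M" and n: "n \<ge> 1" and ssi: "syzygy_stably_iso n M"
    and ev: "\<forall>i. 1 \<le> i \<and> i \<le> n \<longrightarrow> ext_vanishes M i"
  shows "n_strongly_GP n M"
proof -
  obtain Om :: "nat \<Rightarrow> ('a, nat \<Rightarrow> 'a) lmod" where s1: "is_syzygy M (Om 1)"
    and sk: "\<forall>k. 1 \<le> k \<and> k < n \<longrightarrow> is_syzygy (Om k) (Om (Suc k))" and si: "stably_iso (Om n) M"
    using ssi unfolding syzygy_stably_iso_def by blast
  obtain Pc p1 pc where ch: "syzygy_chain M n Pc p1 pc" and Omn: "Om n = chain_kernel M Pc p1 pc n"
    using syzygy_chain_from_syzygies[OF M n s1 sk] by blast
  interpret syzygy_chain M n Pc p1 pc by (rule ch)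
  have ext: "duals_extend (C n) (Pc n)" using duals_extend_syzygy[OF n order.refl] ev n by blast
  have siC: "stably_iso (C n) M" using si Omn by simp
  have "\<exists>Pc' p1' pc' \<sigma>. closed_syzygy_chain M n Pc' p1' pc' \<sigma>"
  proof (cases "n = 1")
    case True show ?thesis by (rule closed_chain_exists_1[OF True ext siC]) blast
  next
    case False
    hence "n \<ge> 2" using n by simp
    show ?thesis by (rule closed_chain_exists_ge2[OF \<open>n \<ge> 2\<close> ext siC]) blast
  qed
  thus ?thesis using closed_syzygy_chain.closed_chain_n_strongly_GP ev by blast
qed

section \<open>Periodic complexes give syzygies\<close>

lemma factors_through_proj_zero:
  fixes X :: "('a::ring_1, 'x) lmod" and Y :: "('a, 'y) lmod" and Q :: "('a, nat \<Rightarrow> 'a) lmod"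
  assumes Y: "lmodule Y" and Q: "fg_projective Q" and h: "\<forall>x\<in>lcarrier X. h x = lzero Y"
  shows "factors_through_proj X Y h"
  unfolding factors_through_proj_def
  using Q lhom_zero_map[OF fg_projectiveD(1)[OF Q]] lhom_zero_map[OF Y] h by fastforce

lemma lmod_iso_stably_iso:
  fixes X :: "('a::ring_1, 'x) lmod" and Y :: "('a, 'y) lmod" and Q :: "('a, nat \<Rightarrow> 'a) lmod"
  assumes X: "lmodule X" and Y: "lmodule Y" and Q: "fg_projective Q" and iso: "lmod_iso X Y"
  shows "stably_iso Y X"
proof -
  obtain \<phi> where \<phi>: "\<phi> \<in> lhom X Y" and b: "bij_betw \<phi> (lcarrier X) (lcarrier Y)"
    using iso unfolding lmod_iso_def by blast
  define \<psi> where "\<psi> = inv_into (lcarrier X) \<phi>"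
  have "\<psi> \<in> lhom Y X" unfolding \<psi>_def by (rule lhom_inv_into[OF X \<phi> b])
  moreover have "\<forall>y\<in>lcarrier Y. lsub Y (\<phi> (\<psi> y)) y = lzero Y"
    using lsub_self[OF Y] b unfolding \<psi>_def by (simp add: bij_betw_inv_into_right)
  hence "factors_through_proj Y Y (\<lambda>y. lsub Y (\<phi> (\<psi> y)) y)" by (rule factors_through_proj_zero[OF Y Q])
  moreover have "\<forall>x\<in>lcarrier X. lsub X (\<psi> (\<phi> x)) x = lzero X"
    using lsub_self[OF X] b unfolding \<psi>_def by (simp add: bij_betw_inv_into_left)
  hence "factors_through_proj X X (\<lambda>x. lsub X (\<psi> (\<phi> x)) x)" by (rule factors_through_proj_zero[OF X Q])
  ultimately show ?thesis unfolding stably_iso_def using \<phi> by blast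
qed

lemma totally_acyclicD:
  assumes "totally_acyclic P d"
  shows "fg_projective (P i)" and "d i \<in> lhom (P i) (P (i + 1))"
    and "{x \<in> lcarrier (P (i + 1)). d (i + 1) x = lzero (P (i + 2))} = d i ` lcarrier (P i)"
    and "f \<in> lhom (P i) regmod \<Longrightarrow> \<forall>x\<in>lcarrier (P (i - 1)). f (d (i - 1) x) = 0 \<Longrightarrow>
           \<exists>g\<in>lhom (P (i + 1)) regmod. \<forall>x\<in>lcarrier (P i). f x = g (d i x)"
  using assms unfolding totally_acyclic_def by blast+

lemma totally_acyclic_augmentation:
  fixes M :: "('a::ring_1, 'm) lmod"
  assumes ta: "totally_acyclic P d" and M: "lmodule M" and iso: "lmod_iso M (lkernel (P 0) (P 1) (d 0))"
  obtains e where "e \<in> lhom (P (-1)) M" "e ` lcarrier (P (-1)) = lcarrier M"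
    "\<And>x. x \<in> lcarrier (P (-1)) \<Longrightarrow> e x = lzero M \<longleftrightarrow> d (-1) x = lzero (P 0)"
proof -
  define Z where "Z = lkernel (P 0) (P 1) (d 0)"
  have PM: "lmodule (P i)" for i using totally_acyclicD(1)[OF ta] fg_projectiveD(1) by blast
  have ZM: "lmodule Z" unfolding Z_def using lkernel_lmodule[OF PM PM totally_acyclicD(2)[OF ta, of 0]] by simp
  obtain \<phi> where \<phi>: "\<phi> \<in> lhom M Z" and \<phi>b: "bij_betw \<phi> (lcarrier M) (lcarrier Z)"
    using iso unfolding lmod_iso_def Z_def by blast
  define \<psi> where "\<psi> = inv_into (lcarrier M) \<phi>"
  have \<psi>: "\<psi> \<in> lhom Z M" unfolding \<psi>_def by (rule lhom_inv_into[OF M \<phi> \<phi>b])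
  have \<psi>o: "\<psi> ` lcarrier Z = lcarrier M" unfolding \<psi>_def using \<phi>b by (metis bij_betw_def bij_betw_inv_into)
  have \<psi>0: "\<psi> z = lzero M \<longleftrightarrow> z = lzero Z" if "z \<in> lcarrier Z" for z
    using that \<phi>b lhom_zero[OF M ZM \<phi>] lhom_zero[OF ZM M \<psi>] unfolding \<psi>_def
    by (metis bij_betw_inv_into_right)
  have img: "d (-1) ` lcarrier (P (-1)) = lcarrier Z"
    unfolding Z_def using totally_acyclicD(3)[OF ta, of "-1"] by simp
  have dZ: "d (-1) \<in> lhom (P (-1)) Z"
    using totally_acyclicD(2)[OF ta, of "-1"] img unfolding Z_def lhom_def by auto
  show ?thesis
  proof
    show "(\<lambda>x. \<psi> (d (-1) x)) \<in> lhom (P (-1)) M" by (rule lhom_comp[OF dZ \<psi>])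
    show "(\<lambda>x. \<psi> (d (-1) x)) ` lcarrier (P (-1)) = lcarrier M"
      using img \<psi>o by (simp add: image_image[symmetric])
    show "\<psi> (d (-1) x) = lzero M \<longleftrightarrow> d (-1) x = lzero (P 0)" if "x \<in> lcarrier (P (-1))" for x
      using \<psi>0 lhom_closed[OF dZ that] unfolding Z_def by simp
  qed
qed

context
  fixes P :: "int \<Rightarrow> ('a::ring_1, nat \<Rightarrow> 'a) lmod" and d and M :: "('a, 'm) lmod" and e
  assumes ta: "totally_acyclic P d" and e: "e \<in> lhom (P (-1)) M" and eo: "e ` lcarrier (P (-1)) = lcarrier M"
    and ker_e: "\<And>x. x \<in> lcarrier (P (-1)) \<Longrightarrow> e x = lzero M \<longleftrightarrow> d (-1) x = lzero (P 0)"
begin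

lemma totally_acyclic_resolution: "proj_resolution M (\<lambda>k. P (-1 - int k)) (\<lambda>k. d (-2 - int k)) e"
  unfolding proj_resolution_def
proof (intro conjI allI)
  fix k :: nat
  have P1: "P (-1 - int (Suc k)) = P (-2 - int k)" by (rule arg_cong[where f = P]) simp
  have P2: "P (-1 - int (Suc (Suc k))) = P (-3 - int k)" by (rule arg_cong[where f = P]) simp
  have d2: "d (-2 - int (Suc k)) = d (-3 - int k)" by (rule arg_cong[where f = d]) simp
  have a: "-2 - int k + 1 = -1 - int k" "-3 - int k + 1 = -2 - int k" "-3 - int k + 2 = -1 - int k" by simp_all
  show "fg_projective (P (-1 - int k))" by (rule totally_acyclicD(1)[OF ta])
  show "d (-2 - int k) \<in> lhom (P (-1 - int (Suc k))) (P (-1 - int k))"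
    unfolding P1 using totally_acyclicD(2)[OF ta, of "-2 - int k"] unfolding a .
  show "{x \<in> lcarrier (P (-1 - int (Suc k))). d (-2 - int k) x = lzero (P (-1 - int k))}
      = d (-2 - int (Suc k)) ` lcarrier (P (-1 - int (Suc (Suc k))))"
    unfolding P1 P2 d2 using totally_acyclicD(3)[OF ta, of "-3 - int k"] unfolding a .
next
  show "e \<in> lhom (P (-1 - int 0)) M" "e ` lcarrier (P (-1 - int 0)) = lcarrier M" using e eo by simp_all
  have "{x \<in> lcarrier (P (-1)). e x = lzero M} = {x \<in> lcarrier (P (-1)). d (-1) x = lzero (P 0)}"
    using ker_e by blast
  also have "\<dots> = d (-2) ` lcarrier (P (-2))" using totally_acyclicD(3)[OF ta, of "-2"] by simp
  finally show "{x \<in> lcarrier (P (-1 - int 0)). e x = lzero M} = d (-2 - int 0) ` lcarrier (P (-1 - int 1))"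
    by simp
qed

lemma totally_acyclic_ext_vanishes:
  assumes i: "i \<ge> 1"
  shows "ext_vanishes M i"
proof -
  define j where "j = -1 - int i"
  have P: "P (-1 - int (Suc i)) = P (j - 1)" "P (-1 - int (i - 1)) = P (j + 1)" "P (-1 - int i) = P j"
    unfolding j_def using i by (intro arg_cong[where f = P]; simp add: of_nat_diff)+
  have d: "d (-2 - int i) = d (j - 1)" "d (-2 - int (i - 1)) = d j"
    unfolding j_def using i by (intro arg_cong[where f = d]; simp add: of_nat_diff)+
  have "\<forall>f\<in>lhom (P (-1 - int i)) regmod. (\<forall>x\<in>lcarrier (P (-1 - int (Suc i))). f (d (-2 - int i) x) = 0) \<longrightarrow>
      (\<exists>g\<in>lhom (P (-1 - int (i - 1))) regmod. \<forall>x\<in>lcarrier (P (-1 - int i)). f x = g (d (-2 - int (i - 1)) x))"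
    unfolding P d using totally_acyclicD(4)[OF ta, of _ j] by blast
  thus ?thesis unfolding ext_vanishes_def using totally_acyclic_resolution by blast
qed

lemma totally_acyclic_first_syzygy: "is_syzygy M (lkernel (P (-1)) (P (-1 + 1)) (d (-1)))"
  unfolding is_syzygy_def
proof (intro exI conjI)
  have "{x \<in> lcarrier (P (-1)). d (-1) x = lzero (P 0)} = {x \<in> lcarrier (P (-1)). e x = lzero M}"
    using ker_e by blast
  thus "lkernel (P (-1)) (P (-1 + 1)) (d (-1)) = lkernel (P (-1)) M e" unfolding lkernel_def by simp
qed (use totally_acyclicD(1)[OF ta] e eo in auto)

end

lemma totally_acyclic_next_syzygy:
  assumes ta: "totally_acyclic P d"
  shows "is_syzygy (lkernel (P (j + 1)) (P (j + 1 + 1)) (d (j + 1))) (lkernel (P j) (P (j + 1)) (d j))"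
  unfolding is_syzygy_def
proof (intro exI conjI)
  have img: "d j ` lcarrier (P j) = lcarrier (lkernel (P (j + 1)) (P (j + 1 + 1)) (d (j + 1)))"
    using totally_acyclicD(3)[OF ta, of j] by (simp add: add.assoc)
  show "fg_projective (P j)" by (rule totally_acyclicD(1)[OF ta])
  show "d j \<in> lhom (P j) (lkernel (P (j + 1)) (P (j + 1 + 1)) (d (j + 1)))"
    using totally_acyclicD(2)[OF ta, of j] img unfolding lhom_def by auto
  show "d j ` lcarrier (P j) = lcarrier (lkernel (P (j + 1)) (P (j + 1 + 1)) (d (j + 1)))" by (rule img)
  show "lkernel (P j) (P (j + 1)) (d j) = lkernel (P j) (lkernel (P (j + 1)) (P (j + 1 + 1)) (d (j + 1))) (d j)"
    by (rule lkernel_cong) simp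
qed

lemma n_strong_kernel_periodic:
  assumes ns: "n_strong n P d"
  shows "lkernel (P (i + int n)) (P (i + int n + 1)) (d (i + int n)) = lkernel (P i) (P (i + 1)) (d i)"
proof -
  have per: "P (j + int n) = P j" for j using ns unfolding n_strong_def by blast
  have P: "P (i + int n) = P i" "P (i + int n + 1) = P (i + 1)"
    using per[of i] per[of "i + 1"] by (simp_all add: add_ac)
  have "\<forall>x\<in>lcarrier (P i). d (i + int n) x = d i x" using ns unfolding n_strong_def by blast
  hence "{x \<in> lcarrier (P i). d (i + int n) x = lzero (P (i + 1))} = {x \<in> lcarrier (P i). d i x = lzero (P (i + 1))}"
    by auto
  thus ?thesis unfolding lkernel_def P by simp
qed

lemma n_strongly_GP_imp_syzygy_ext:
  fixes M :: "('a::ring_1, 'm) lmod"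
  assumes M: "lmodule M" and sg: "n_strongly_GP n M"
  shows "syzygy_stably_iso n M" and "\<forall>i. 1 \<le> i \<longrightarrow> ext_vanishes M i"
proof -
  obtain P d where ns: "n_strong n P d" and iso: "lmod_iso M (lkernel (P 0) (P 1) (d 0))"
    using sg unfolding n_strongly_GP_def by blast
  have ta: "totally_acyclic P d" using ns unfolding n_strong_def by blast
  obtain e where e: "e \<in> lhom (P (-1)) M" "e ` lcarrier (P (-1)) = lcarrier M"
    and ker_e: "\<And>x. x \<in> lcarrier (P (-1)) \<Longrightarrow> e x = lzero M \<longleftrightarrow> d (-1) x = lzero (P 0)"
    using totally_acyclic_augmentation[OF ta M iso] by blast
  show "\<forall>i. 1 \<le> i \<longrightarrow> ext_vanishes M i" using totally_acyclic_ext_vanishes[OF ta e ker_e] by blast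
  define Om where "Om = (\<lambda>k::nat. lkernel (P (- int k)) (P (- int k + 1)) (d (- int k)))"
  have "is_syzygy M (Om 1)" unfolding Om_def using totally_acyclic_first_syzygy[OF ta e ker_e] by simp
  moreover have "is_syzygy (Om k) (Om (Suc k))" for k
    using totally_acyclic_next_syzygy[OF ta, of "- int (Suc k)"] unfolding Om_def by simp
  moreover have "stably_iso (Om n) M"
  proof -
    have "Om n = lkernel (P 0) (P 1) (d 0)" unfolding Om_def using n_strong_kernel_periodic[OF ns, of "- int n"] by simp
    moreover have "lmodule (lkernel (P 0) (P 1) (d 0))"
      using lkernel_lmodule totally_acyclicD(1,2)[OF ta] fg_projectiveD(1) by fastforce
    ultimately show ?thesis using lmod_iso_stably_iso[OF M _ totally_acyclicD(1)[OF ta] iso] by simp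
  qed
  ultimately show "syzygy_stably_iso n M" unfolding syzygy_stably_iso_def by blast
qed

theorem proposition2p2p17:
  fixes phi :: "'r::comm_ring_1 \<Rightarrow> 'a::ring_1"
    and M :: "('a, 'm) lmod"
    and n :: nat
  assumes "artin_algebra phi"
    and "n \<ge> 1"
    and "lmodule M"
    and "fin_gen M"
  shows "n_strongly_GP n M \<longleftrightarrow>
           (syzygy_stably_iso n M \<and> (\<forall>i. 1 \<le> i \<and> i \<le> n \<longrightarrow> ext_vanishes M i))"
  using n_strongly_GP_imp_syzygy_ext[OF assms(3)] syzygy_ext_imp_n_strongly_GP[OF assms(3,2)] by blast

end
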